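(* Let $\mathcal{K}\subseteq\mathbb{R}^n$ be a proper convex cone with a $\nu$-LHSCB $f$, and let $A\in\mathbb{R}^{m\times n}$ (full row rank), $\mathbf{b}\in\mathbb{R}^m$, $\mathbf{c}\in\mathbb{R}^n$. Let $0<\eta\le\frac14$, $\vartheta=\frac{\eta/2}{\sqrt\nu+1}$, $\tau>0$, and $(\mathbf{x},\mathbf{y},\mathbf{s})\in\mathcal{N}(\eta,\tau)$. Let $(\Delta\mathbf{x},\Delta\mathbf{y},\Delta\mathbf{s})$ be the solution of the Newton system at $(\mathbf{x},\mathbf{y},\mathbf{s})$ with parameter $\tau$, let $\alpha\in(0,1]$, and set $\mathbf{x}^+=\mathbf{x}+\alpha\Delta\mathbf{x}$, $\mathbf{s}^+=\mathbf{s}+\alpha\Delta\mathbf{s}$, $\mathbf{y}^+=\mathbf{y}+\alpha\Delta\mathbf{y}$, and $\tau^+=(1-\vartheta)\tau$. Then \[\|\mathbf{s}^++\tau^+g(\mathbf{x}^+)\|^*_{\mathbf{x}^+}\le 2\eta\tau^+.\]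
   Context: $\mathcal{K}\subseteq\mathbb{R}^n$ is a proper (closed, convex, pointed, full-dimensional) cone with interior $\mathcal{K}^\circ$ and dual cone $\mathcal{K}^*$. A $\nu$-LHSCB for $\mathcal{K}$ is a strictly convex, three times differentiable $f:\mathcal{K}^\circ\to\mathbb{R}$ with $f(\mathbf{x})\to\infty$ at the boundary of $\mathcal{K}$, $|D^3f(\mathbf{x})[\mathbf{h},\mathbf{h},\mathbf{h}]|\le 2\,(D^2f(\mathbf{x})[\mathbf{h},\mathbf{h}])^{3/2}$, $\nu=\sup_{\mathbf{x}\in\mathcal{K}^\circ}g(\mathbf{x})^\top H(\mathbf{x})^{-1}g(\mathbf{x})<\infty$, and $f(t\mathbf{x})=f(\mathbf{x})-\nu\ln t$ for $t>0$; $g,H$ are its gradient and Hessian. $\|\mathbf{v}\|^*_{\mathbf{x}}=\sqrt{\mathbf{v}^\top H(\mathbf{x})^{-1}\mathbf{v}}$. $\mathcal{F}^\circ=\{(\mathbf{x},\mathbf{y},\mathbf{s})\in\mathcal{K}^\circ\times\mathbb{R}^m\times(\mathcal{K}^* )^\circ:A\mathbf{x}=\mathbf{b},A^\top\mathbf{y}+\mathbf{s}=\mathbf{c}\}$, $\mathcal{N}(\eta,\tau)=\{(\mathbf{x},\mathbf{y},\mathbf{s})\in\mathcal{F}^\circ:\|\mathbf{s}+\tau g(\mathbf{x})\|^*_{\mathbf{x}}\le\eta\tau\}$. The Newton system at $(\mathbf{x},\mathbf{y},\mathbf{s})$ with parameter $\tau$ is $A\Delta\mathbf{x}=\mathbf{0}$,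 $A^\top\Delta\mathbf{y}+\Delta\mathbf{s}=\mathbf{0}$, $\tau H(\mathbf{x})\Delta\mathbf{x}+\Delta\mathbf{s}=-(\mathbf{s}+\tau g(\mathbf{x}))$. *)

theory Defs
  imports "HOL-Analysis.Analysis"
begin

definition proper_cone :: "(real^'n) set \<Rightarrow> bool" where
  "proper_cone K \<longleftrightarrow> closed K \<and> convex K \<and> cone K \<and>
     K \<inter> uminus ` K = {0} \<and> interior K \<noteq> {}"

definition dual_cone :: "(real^'n) set \<Rightarrow> (real^'n) set" where
  "dual_cone K = {s. \<forall>x\<in>K. x \<bullet> s \<ge> 0}"

definition strictly_convex_on :: "(real^'n) set \<Rightarrow> (real^'n \<Rightarrow> real) \<Rightarrow> bool" where
  "strictly_convex_on S f \<longleftrightarrow> convex S \<and>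
     (\<forall>x\<in>S. \<forall>y\<in>S. x \<noteq> y \<longrightarrow> (\<forall>t::real. 0 < t \<and> t < 1 \<longrightarrow>
        f ((1 - t) *\<^sub>R x + t *\<^sub>R y) < (1 - t) * f x + t * f y))"

text \<open>The Hessian is required to be
  invertible, as presupposed by the definition of \<nu> via H^{-1}.\<close>
definition lhscb :: "(real^'n) set \<Rightarrow> (real^'n \<Rightarrow> real) \<Rightarrow> (real^'n \<Rightarrow> real^'n)
    \<Rightarrow> (real^'n \<Rightarrow> real^'n^'n) \<Rightarrow> real \<Rightarrow> bool" where
  "lhscb K f g H \<nu> \<longleftrightarrow>
     strictly_convex_on (interior K) f \<and>
     (\<forall>x\<in>interior K. (f has_derivative (\<lambda>h. g x \<bullet> h)) (at x)) \<and>
     (\<forall>x\<in>interior K. (g has_derivative (\<lambda>h. H x *v h)) (at x)) \<and>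
     (\<forall>x\<in>interior K. \<exists>D3. (H has_derivative D3) (at x) \<and>
         (\<forall>h. \<bar>h \<bullet> (D3 h *v h)\<bar> \<le> 2 * (h \<bullet> (H x *v h)) powr (3/2))) \<and>
     (\<forall>x\<in>interior K. invertible (H x)) \<and>
     (\<forall>p\<in>frontier K. filterlim f at_top (at p within interior K)) \<and>
     bdd_above ((\<lambda>x. g x \<bullet> (matrix_inv (H x) *v g x)) ` interior K) \<and>
     \<nu> = (SUP x\<in>interior K. g x \<bullet> (matrix_inv (H x) *v g x)) \<and>
     (\<forall>x\<in>interior K. \<forall>t>0. f (t *\<^sub>R x) = f x - \<nu> * ln t)"

definition dual_local_norm :: "(real^'n \<Rightarrow> real^'n^'n) \<Rightarrow> real^'n \<Rightarrow> real^'n \<Rightarrow> real" where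
  "dual_local_norm H x v = sqrt (v \<bullet> (matrix_inv (H x) *v v))"

definition strictly_feasible ::
  "(real^'n) set \<Rightarrow> real^'n^'m \<Rightarrow> real^'m \<Rightarrow> real^'n \<Rightarrow> ((real^'n) \<times> (real^'m) \<times> (real^'n)) set" where
  "strictly_feasible K A b c = {(x, y, s). x \<in> interior K \<and> s \<in> interior (dual_cone K) \<and>
      A *v x = b \<and> transpose A *v y + s = c}"

definition neighborhood ::
  "(real^'n) set \<Rightarrow> real^'n^'m \<Rightarrow> real^'m \<Rightarrow> real^'n \<Rightarrow> (real^'n \<Rightarrow> real^'n)
    \<Rightarrow> (real^'n \<Rightarrow> real^'n^'n) \<Rightarrow> real \<Rightarrow> real \<Rightarrow> ((real^'n) \<times> (real^'m) \<times> (real^'n)) set" where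
  "neighborhood K A b c g H \<eta> \<tau> = {(x, y, s) \<in> strictly_feasible K A b c.
      dual_local_norm H x (s + \<tau> *\<^sub>R g x) \<le> \<eta> * \<tau>}"

definition newton_system ::
  "real^'n^'m \<Rightarrow> (real^'n \<Rightarrow> real^'n) \<Rightarrow> (real^'n \<Rightarrow> real^'n^'n) \<Rightarrow> real
    \<Rightarrow> real^'n \<Rightarrow> real^'m \<Rightarrow> real^'n \<Rightarrow> real^'n \<Rightarrow> real^'m \<Rightarrow> real^'n \<Rightarrow> bool" where
  "newton_system A g H \<tau> x y s dx dy ds \<longleftrightarrow>
     A *v dx = 0 \<and> transpose A *v dy + ds = 0 \<and>
     \<tau> *\<^sub>R (H x *v dx) + ds = - (s + \<tau> *\<^sub>R g x)"

end

theory Submission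
  imports Defs
begin

text \<open>
  Write \<open>d = \<alpha> \<Delta>x\<close> and \<open>r = \<parallel>d\<parallel>\<^sub>x\<close>. Since \<open>A \<Delta>x = 0\<close> and \<open>\<Delta>s\<close> lies in the range of \<open>A\<^sup>T\<close>, the
  Newton equation is an orthogonal decomposition, whence \<open>\<tau> \<parallel>\<Delta>x\<parallel>\<^sub>x \<le> \<parallel>s + \<tau> g(x)\<parallel>\<^sup>*\<^sub>x \<le> \<eta> \<tau>\<close> and
  \<open>r \<le> \<alpha> \<eta> \<le> 1/4\<close>.

  Self-concordance and the symmetry of the third derivative give, by polarization,
  \<open>\<bar>D\<^sup>3f(y)[d,h,h]\<bar> \<le> 3 \<parallel>d\<parallel>\<^sub>y \<parallel>h\<parallel>\<^sub>y\<^sup>2\<close>; integrating along the segment yields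
  \<open>(1 - t r)\<^sup>3 H(x) \<le> H(x + t d) \<le> (1 - t r)\<^sup>-\<^sup>3 H(x)\<close>. Along the segment the barrier therefore
  has bounded second derivative, so it stays bounded and the segment cannot reach the boundary.

  The new residual is \<open>(1 - \<alpha>)(s + \<tau> g(x)) + \<tau> (g(x + d) - g(x) - H(x) d) - \<theta> \<tau> g(x + d)\<close>. In the
  dual norm at \<open>x\<close> the first two terms are at most \<open>(1 - \<alpha>) \<eta> \<tau>\<close> and \<open>\<tau> \<rho>(r)\<close> (where \<open>\<rho> = remainder_coeff\<close>), passing to
  \<open>x + d\<close> costs a factor \<open>(1 - r)\<^sup>-\<^sup>2\<close>, and the last term is at most \<open>\<theta> \<tau> \<surd>\<nu>\<close>. An elementary
  estimate then gives \<open>2 \<eta> (1 - \<theta>) \<tau>\<close>.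
\<close>

section \<open>Quadratic forms and local norms\<close>

definition quad_form :: "real^'n^'n \<Rightarrow> real^'n \<Rightarrow> real" where
  "quad_form M h = h \<bullet> (M *v h)"

definition symmetric_matrix :: "real^'n^'n \<Rightarrow> bool" where
  "symmetric_matrix M \<longleftrightarrow> (\<forall>u v. u \<bullet> (M *v v) = v \<bullet> (M *v u))"

definition pos_semidef :: "real^'n^'n \<Rightarrow> bool" where
  "pos_semidef M \<longleftrightarrow> (\<forall>h. 0 \<le> quad_form M h)"

lemma quad_form_add:
  "symmetric_matrix M \<Longrightarrow> quad_form M (u + v) = quad_form M u + 2 * (u \<bullet> (M *v v)) + quad_form M v"
  unfolding quad_form_def symmetric_matrix_def
  by (simp add: matrix_vector_right_distrib inner_add_left inner_add_right)

lemma quad_form_diff: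
  "symmetric_matrix M \<Longrightarrow> quad_form M (u - v) = quad_form M u - 2 * (u \<bullet> (M *v v)) + quad_form M v"
  unfolding quad_form_def symmetric_matrix_def
  by (simp add: matrix_vector_mult_diff_distrib inner_diff_left inner_diff_right)

lemma quad_form_scaleR: "quad_form M (c *\<^sub>R u) = c\<^sup>2 * quad_form M u"
  unfolding quad_form_def by (simp add: matrix_vector_mult_scaleR power2_eq_square)

lemma sqrt_quad_form_scaleR: "sqrt (quad_form M (c *\<^sub>R u)) = \<bar>c\<bar> * sqrt (quad_form M u)"
  by (simp add: quad_form_scaleR real_sqrt_mult)

lemma quad_form_matrix_diff: "quad_form (M - N) v = quad_form M v - quad_form N v"
  by (simp add: quad_form_def matrix_vector_mult_diff_rdistrib inner_diff_right)

lemma symmetric_matrix_diff: "symmetric_matrix M \<Longrightarrow> symmetric_matrix N \<Longrightarrow> symmetric_matrix (M - N)"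
  by (simp add: symmetric_matrix_def matrix_vector_mult_diff_rdistrib inner_diff_right)

lemma quad_form_parallelogram:
  "symmetric_matrix M \<Longrightarrow> quad_form M (u + v) + quad_form M (u - v) = 2 * quad_form M u + 2 * quad_form M v"
  by (simp add: quad_form_add quad_form_diff)

lemma quad_form_Cauchy_Schwarz:
  assumes "symmetric_matrix M" "pos_semidef M"
  shows "(u \<bullet> (M *v v))\<^sup>2 \<le> quad_form M u * quad_form M v"
proof -
  define b where "b = u \<bullet> (M *v v)"
  have expand: "0 \<le> quad_form M u - 2 * l * b + l\<^sup>2 * quad_form M v" for l
    using assms(2) quad_form_diff[OF assms(1), of u "l *\<^sub>R v"] quad_form_scaleR[of M l v]
    unfolding pos_semidef_def by (metis b_def inner_scaleR_right matrix_vector_mult_scaleR mult.assoc)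
  have nonneg: "0 \<le> quad_form M u" "0 \<le> quad_form M v"
    using assms(2) by (auto simp: pos_semidef_def)
  show ?thesis
  proof (cases "quad_form M v = 0")
    case True
    have "b = 0"
    proof (rule ccontr)
      assume "b \<noteq> 0"
      with expand[of "(quad_form M u + 1) / (2 * b)"] True show False by (simp add: field_simps)
    qed
    then show ?thesis using nonneg by (simp add: b_def)
  next
    case False
    with nonneg have pos: "0 < quad_form M v" by simp
    have "0 \<le> quad_form M u - b\<^sup>2 / quad_form M v"
      using expand[of "b / quad_form M v"] pos by (simp add: field_simps power2_eq_square)
    then show ?thesis using pos by (simp add: b_def field_simps)
  qed
qed

lemma abs_bilinear_le_sqrt_quad_form:
  assumes "symmetric_matrix M" "pos_semidef M"
  shows "\<bar>u \<bullet> (M *v v)\<bar> \<le> sqrt (quad_form M u) * sqrt (quad_form M v)"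
  using real_sqrt_le_mono[OF quad_form_Cauchy_Schwarz[OF assms, of u v]]
  by (simp add: real_sqrt_mult)

lemma sqrt_quad_form_triangle:
  assumes "symmetric_matrix M" "pos_semidef M"
  shows "sqrt (quad_form M (u + v)) \<le> sqrt (quad_form M u) + sqrt (quad_form M v)"
proof -
  have nonneg: "0 \<le> quad_form M u" "0 \<le> quad_form M v"
    using assms(2) by (auto simp: pos_semidef_def)
  have "quad_form M (u + v) \<le> quad_form M u + 2 * (sqrt (quad_form M u) * sqrt (quad_form M v)) + quad_form M v"
    using quad_form_add[OF assms(1), of u v] abs_bilinear_le_sqrt_quad_form[OF assms, of u v] by linarith
  also have "\<dots> = (sqrt (quad_form M u) + sqrt (quad_form M v))\<^sup>2"
    using nonneg by (simp add: power2_eq_square algebra_simps)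
  finally show ?thesis using nonneg by (simp add: real_le_lsqrt)
qed

lemma abs_bilinear_le_by_quad_form_bound:
  assumes G: "symmetric_matrix G" and M: "symmetric_matrix M"
    and pd: "\<And>v. v \<noteq> 0 \<Longrightarrow> 0 < quad_form M v"
    and bound: "\<And>v. \<bar>quad_form G v\<bar> \<le> a * quad_form M v"
  shows "\<bar>w \<bullet> (G *v d)\<bar> \<le> a * sqrt (quad_form M w) * sqrt (quad_form M d)"
proof (cases "w = 0 \<or> d = 0")
  case True
  then show ?thesis by (auto simp: quad_form_def)
next
  case False
  define nw where "nw = sqrt (quad_form M w)"
  define nd where "nd = sqrt (quad_form M d)"
  have nw: "nw > 0" and nd: "nd > 0" using pd False by (auto simp: nw_def nd_def)
  have "quad_form M w = nw\<^sup>2" "quad_form M d = nd\<^sup>2"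
    using pd[of w] pd[of d] False by (simp_all add: nw_def nd_def)
  \<comment> \<open>rescale \<open>w\<close> and \<open>d\<close> to equal \<open>M\<close>-norms, then polarize\<close>
  define \<mu> where "\<mu> = sqrt (nd / nw)"
  have \<mu>: "\<mu> > 0" "\<mu>\<^sup>2 = nd / nw" using nw nd by (simp_all add: \<mu>_def)
  define u where "u = \<mu> *\<^sub>R w"
  define v where "v = (1 / \<mu>) *\<^sub>R d"
  have "quad_form M (u + v) + quad_form M (u - v) = 2 * (\<mu>\<^sup>2 * nw\<^sup>2) + 2 * (nd\<^sup>2 / \<mu>\<^sup>2)"
    using quad_form_parallelogram[OF M, of u v] quad_form_scaleR[of M \<mu> w] quad_form_scaleR[of M "1 / \<mu>" d]
      \<open>quad_form M w = nw\<^sup>2\<close> \<open>quad_form M d = nd\<^sup>2\<close>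
    by (simp add: u_def v_def power_divide)
  also have "\<dots> = 4 * (nw * nd)"
    unfolding \<mu>(2) using nw nd by (simp add: field_simps power2_eq_square)
  finally have sum: "quad_form M (u + v) + quad_form M (u - v) = 4 * (nw * nd)" .
  have "4 * \<bar>w \<bullet> (G *v d)\<bar> = \<bar>quad_form G (u + v) - quad_form G (u - v)\<bar>"
    using quad_form_add[OF G, of u v] quad_form_diff[OF G, of u v] \<mu>(1)
    by (simp add: u_def v_def matrix_vector_mult_scaleR)
  also have "\<dots> \<le> a * (quad_form M (u + v) + quad_form M (u - v))"
    using bound[of "u + v"] bound[of "u - v"] by (simp add: distrib_left abs_le_iff)
  finally show ?thesis unfolding sum by (simp add: nw_def nd_def)
qed

abbreviation local_norm :: "(real^'n \<Rightarrow> real^'n^'n) \<Rightarrow> real^'n \<Rightarrow> real^'n \<Rightarrow> real" where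
  "local_norm H x h \<equiv> sqrt (quad_form (H x) h)"

lemma matrix_inv_right: "invertible M \<Longrightarrow> (M::real^'n^'n) *v (matrix_inv M *v v) = v"
  unfolding invertible_def matrix_inv_def
  by (metis (mono_tags, lifting) matrix_vector_mul_assoc matrix_vector_mul_lid someI_ex)

context
  fixes H :: "real^'n \<Rightarrow> real^'n^'n" and x :: "real^'n"
  assumes sym: "symmetric_matrix (H x)" and psd: "pos_semidef (H x)" and inv: "invertible (H x)"
begin

lemma dual_local_norm_eq: "dual_local_norm H x v = local_norm H x (matrix_inv (H x) *v v)"
  using matrix_inv_right[OF inv, of v] by (metis dual_local_norm_def inner_commute quad_form_def)

lemma dual_local_norm_nonneg: "0 \<le> dual_local_norm H x v"
  using psd by (simp add: dual_local_norm_eq pos_semidef_def)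

lemma abs_inner_le_dual_local_norm: "\<bar>w \<bullet> v\<bar> \<le> dual_local_norm H x v * local_norm H x w"
  using abs_bilinear_le_sqrt_quad_form[OF sym psd, of w "matrix_inv (H x) *v v"]
  by (simp add: matrix_inv_right[OF inv] dual_local_norm_eq mult.commute)

lemma dual_local_norm_le:
  assumes "0 \<le> \<beta>" and bound: "\<And>w. \<bar>w \<bullet> v\<bar> \<le> \<beta> * local_norm H x w"
  shows "dual_local_norm H x v \<le> \<beta>"
proof -
  define z where "z = matrix_inv (H x) *v v"
  define n where "n = local_norm H x z"
  have "n * n = quad_form (H x) z" using psd by (simp add: n_def pos_semidef_def)
  also have "\<dots> = z \<bullet> v" using matrix_inv_right[OF inv, of v] by (simp add: quad_form_def z_def)
  finally have "n * n = z \<bullet> v" .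
  then have "n * n \<le> \<beta> * n" using bound[of z] abs_ge_self[of "z \<bullet> v"] unfolding n_def by linarith
  moreover have "0 \<le> n" using psd by (simp add: n_def pos_semidef_def)
  ultimately have "n \<le> \<beta>" using \<open>0 \<le> \<beta>\<close> by (cases "n = 0") (auto simp: mult_le_cancel_right)
  then show ?thesis by (simp add: dual_local_norm_eq n_def z_def)
qed

lemma dual_local_norm_triangle:
  "dual_local_norm H x (v + w) \<le> dual_local_norm H x v + dual_local_norm H x w"
  using sqrt_quad_form_triangle[OF sym psd] by (simp add: dual_local_norm_eq matrix_vector_right_distrib)

lemma dual_local_norm_scaleR: "dual_local_norm H x (c *\<^sub>R v) = \<bar>c\<bar> * dual_local_norm H x v"
  by (simp add: dual_local_norm_eq matrix_vector_mult_scaleR sqrt_quad_form_scaleR)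

lemma local_norm_le_dual_local_norm_of_newton_equation:
  assumes "0 \<le> \<tau>" and "dx \<bullet> ds = 0" and "\<tau> *\<^sub>R (H x *v dx) + ds = - v"
  shows "\<tau> * local_norm H x dx \<le> dual_local_norm H x v"
proof -
  define n where "n = local_norm H x dx"
  have "0 \<le> quad_form (H x) dx" using psd by (simp add: pos_semidef_def)
  then have n: "0 \<le> n" "quad_form (H x) dx = n * n" by (simp_all add: n_def)
  have "v = - (\<tau> *\<^sub>R (H x *v dx) + ds)" using assms(3) by (metis minus_minus)
  then have "dx \<bullet> v = - (\<tau> * quad_form (H x) dx)"
    using assms(2) by (simp add: inner_diff_right quad_form_def)
  then have "\<tau> * n * n = \<bar>dx \<bullet> v\<bar>"
    using assms(1) n by (simp add: abs_mult)
  also have "\<dots> \<le> dual_local_norm H x v * n"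
    unfolding n_def by (rule abs_inner_le_dual_local_norm)
  finally have "\<tau> * n * n \<le> dual_local_norm H x v * n" .
  then show ?thesis
    using n(1) dual_local_norm_nonneg[of v] unfolding n_def[symmetric]
    by (cases "n = 0") (auto simp: mult_le_cancel_right)
qed

end

section \<open>Symmetry of second derivatives\<close>

lemma has_real_derivative_along_line:
  fixes \<phi> :: "'a::real_normed_vector \<Rightarrow> real"
  assumes "(\<phi> has_derivative L) (at (x + t *\<^sub>R v))"
  shows "((\<lambda>t. \<phi> (x + t *\<^sub>R v)) has_real_derivative L v) (at t)"
proof -
  have "((\<lambda>t. x + t *\<^sub>R v) has_derivative (\<lambda>h. h *\<^sub>R v)) (at t)"
    by (auto intro!: derivative_eq_intros)
  from has_derivative_compose[OF this assms]
  have "((\<lambda>t. \<phi> (x + t *\<^sub>R v)) has_derivative (\<lambda>h. L (h *\<^sub>R v))) (at t)" by simp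
  moreover have "(\<lambda>h. L (h *\<^sub>R v)) = (*) (L v)"
    using linear_scale[OF has_derivative_linear[OF assms]] by (auto simp: fun_eq_iff mult.commute)
  ultimately show ?thesis by (simp add: has_field_derivative_def)
qed

lemma bounded_linear_matrix_vector_mult_left: "bounded_linear (\<lambda>M::real^'n^'m. M *v c)"
  by (rule bounded_linearI')
     (simp_all add: matrix_vector_mult_add_rdistrib scaleR_matrix_vector_assoc[symmetric])

lemma has_derivative_matrix_vector_mult_left:
  fixes H :: "'a::real_normed_vector \<Rightarrow> real^'n^'m"
  assumes "(H has_derivative D) (at y)"
  shows "((\<lambda>y. H y *v c) has_derivative (\<lambda>k. D k *v c)) (at y)"
  using bounded_linear.has_derivative[OF bounded_linear_matrix_vector_mult_left assms] .

lemma has_derivative_bilinear_matrix: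
  fixes H :: "'a::real_normed_vector \<Rightarrow> real^'n^'m"
  shows "(H has_derivative D) (at y) \<Longrightarrow> ((\<lambda>y. w \<bullet> (H y *v h)) has_derivative (\<lambda>k. w \<bullet> (D k *v h))) (at y)"
  by (auto intro!: derivative_eq_intros has_derivative_matrix_vector_mult_left)

lemma has_derivative_increment_bound:
  assumes "(G has_derivative M) (at x)" "0 < e"
  obtains \<delta> where "0 < \<delta>"
    "\<And>y z. norm (y - x) < \<delta> \<Longrightarrow> norm (z - x) < \<delta> \<Longrightarrow>
       norm (G y - G z - M (y - z)) \<le> e * (norm (y - x) + norm (z - x))"
proof -
  obtain \<delta> where \<delta>: "0 < \<delta>" "\<And>y. norm (y - x) < \<delta> \<Longrightarrow> norm (G y - G x - M (y - x)) \<le> e * norm (y - x)"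
    using assms unfolding has_derivative_at_alt by blast
  have lin: "linear M" using assms(1) has_derivative_linear by blast
  have "norm (G y - G z - M (y - z)) \<le> e * (norm (y - x) + norm (z - x))"
    if "norm (y - x) < \<delta>" "norm (z - x) < \<delta>" for y z
  proof -
    have "G y - G z - M (y - z) = (G y - G x - M (y - x)) - (G z - G x - M (z - x))"
      using linear_diff[OF lin, of "y - x" "z - x"] by (simp add: algebra_simps)
    then have "norm (G y - G z - M (y - z)) \<le> norm (G y - G x - M (y - x)) + norm (G z - G x - M (z - x))"
      by (metis norm_triangle_ineq4)
    also have "\<dots> \<le> e * norm (y - x) + e * norm (z - x)"
      using \<delta>(2)[OF that(1)] \<delta>(2)[OF that(2)] by (rule add_mono)
    finally show ?thesis by (simp add: distrib_left)
  qed
  with \<delta>(1) show ?thesis using that by blast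
qed

lemma second_difference_mean_value:
  fixes u :: "'a::real_inner \<Rightarrow> real"
  assumes du: "\<And>y. y \<in> S \<Longrightarrow> (u has_derivative (\<lambda>h. G y \<bullet> h)) (at y)"
    and seg: "\<And>t. 0 \<le> t \<Longrightarrow> t \<le> 1 \<Longrightarrow> x + a + t *\<^sub>R b \<in> S \<and> x + t *\<^sub>R b \<in> S"
  obtains z where "0 < z" "z < 1"
    "u (x + a + b) - u (x + b) - u (x + a) + u x = (G (x + a + z *\<^sub>R b) - G (x + z *\<^sub>R b)) \<bullet> b"
proof -
  define F where "F t = u (x + a + t *\<^sub>R b) - u (x + t *\<^sub>R b)" for t
  have "(F has_real_derivative (G (x + a + t *\<^sub>R b) - G (x + t *\<^sub>R b)) \<bullet> b) (at t)"
    if "0 \<le> t" "t \<le> 1" for t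
    unfolding F_def inner_diff_left
    using seg[OF that] du has_real_derivative_along_line[of u _ "x + a" t b]
      has_real_derivative_along_line[of u _ x t b]
    by (intro DERIV_diff) (auto simp: add.assoc)
  then obtain z where "0 < z" "z < 1" "F 1 - F 0 = (1 - 0) * ((G (x + a + z *\<^sub>R b) - G (x + z *\<^sub>R b)) \<bullet> b)"
    using MVT2[of 0 1 F "\<lambda>t. (G (x + a + t *\<^sub>R b) - G (x + t *\<^sub>R b)) \<bullet> b"] by auto
  with that show ?thesis by (simp add: F_def)
qed

lemma norm_segment_points_le:
  fixes a b :: "'a::real_normed_vector"
  assumes "0 \<le> s" "0 \<le> t" "t \<le> 1"
  shows "norm (s *\<^sub>R a + t *\<^sub>R (s *\<^sub>R b)) \<le> s * (norm a + norm b)"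
    and "norm (t *\<^sub>R (s *\<^sub>R b)) \<le> s * (norm a + norm b)"
proof -
  have "norm (t *\<^sub>R (s *\<^sub>R b)) = t * (s * norm b)" using assms by (simp add: abs_mult)
  also have "\<dots> \<le> s * norm b" using assms by (intro mult_left_le_one_le) auto
  finally have "norm (t *\<^sub>R (s *\<^sub>R b)) \<le> s * norm b" .
  moreover have "norm (s *\<^sub>R a + t *\<^sub>R (s *\<^sub>R b)) \<le> s * norm a + norm (t *\<^sub>R (s *\<^sub>R b))"
    using norm_triangle_ineq[of "s *\<^sub>R a" "t *\<^sub>R (s *\<^sub>R b)"] assms(1) by simp
  ultimately show "norm (s *\<^sub>R a + t *\<^sub>R (s *\<^sub>R b)) \<le> s * (norm a + norm b)"
    and "norm (t *\<^sub>R (s *\<^sub>R b)) \<le> s * (norm a + norm b)"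
    using assms(1) by (simp_all add: distrib_left add_increasing)
qed

lemma second_difference_estimate:
  fixes u :: "'a::real_inner \<Rightarrow> real"
  assumes du: "\<And>y. y \<in> ball x \<rho> \<Longrightarrow> (u has_derivative (\<lambda>h. G y \<bullet> h)) (at y)"
    and M: "linear M"
    and peano: "\<And>y z. norm (y - x) < \<rho> \<Longrightarrow> norm (z - x) < \<rho> \<Longrightarrow>
       norm (G y - G z - M (y - z)) \<le> \<epsilon> * (norm (y - x) + norm (z - x))"
    and "0 \<le> \<epsilon>" "0 < s" and small: "s * (norm a + norm b) < \<rho>"
  shows "\<bar>u (x + s *\<^sub>R a + s *\<^sub>R b) - u (x + s *\<^sub>R b) - u (x + s *\<^sub>R a) + u x - s\<^sup>2 * (M a \<bullet> b)\<bar>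
    \<le> 2 * \<epsilon> * s\<^sup>2 * (norm a + norm b) * norm b"
proof -
  have near: "norm (x + s *\<^sub>R a + t *\<^sub>R (s *\<^sub>R b) - x) \<le> s * (norm a + norm b)"
    "norm (x + t *\<^sub>R (s *\<^sub>R b) - x) \<le> s * (norm a + norm b)" if "0 \<le> t" "t \<le> 1" for t
    using norm_segment_points_le[where s=s and t=t and a=a and b=b] \<open>0 < s\<close> that
    by (simp_all add: add.assoc)
  obtain z where z: "0 < z" "z < 1"
    "u (x + s *\<^sub>R a + s *\<^sub>R b) - u (x + s *\<^sub>R b) - u (x + s *\<^sub>R a) + u x
      = (G (x + s *\<^sub>R a + z *\<^sub>R (s *\<^sub>R b)) - G (x + z *\<^sub>R (s *\<^sub>R b))) \<bullet> (s *\<^sub>R b)"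
  proof (rule second_difference_mean_value[OF du, where x=x and a="s *\<^sub>R a" and b="s *\<^sub>R b"])
    have in_ball: "p \<in> ball x \<rho>" if "norm (p - x) \<le> s * (norm a + norm b)" for p
      using that small by (metis dist_commute dist_norm le_less_trans mem_ball)
    fix t :: real assume "0 \<le> t" "t \<le> 1"
    then show "x + s *\<^sub>R a + t *\<^sub>R (s *\<^sub>R b) \<in> ball x \<rho> \<and> x + t *\<^sub>R (s *\<^sub>R b) \<in> ball x \<rho>"
      using in_ball near by blast
  qed (auto simp: add.assoc)
  define p where "p = x + s *\<^sub>R a + z *\<^sub>R (s *\<^sub>R b)"
  define q where "q = x + z *\<^sub>R (s *\<^sub>R b)"
  have pq: "norm (p - x) \<le> s * (norm a + norm b)" "norm (q - x) \<le> s * (norm a + norm b)"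
    using near[of z] z by (auto simp: p_def q_def)
  have "M (p - q) = s *\<^sub>R M a" using linear_scale[OF M] by (simp add: p_def q_def)
  then have "(G p - G q) \<bullet> (s *\<^sub>R b) - s\<^sup>2 * (M a \<bullet> b) = s * ((G p - G q - M (p - q)) \<bullet> b)"
    by (simp add: inner_diff_left power2_eq_square algebra_simps)
  then have "\<bar>(G p - G q) \<bullet> (s *\<^sub>R b) - s\<^sup>2 * (M a \<bullet> b)\<bar> = s * \<bar>(G p - G q - M (p - q)) \<bullet> b\<bar>"
    using \<open>0 < s\<close> by (simp add: abs_mult)
  also have "\<dots> \<le> s * (norm (G p - G q - M (p - q)) * norm b)"
    using \<open>0 < s\<close> Cauchy_Schwarz_ineq2 by (simp add: mult_left_mono)
  also have "\<dots> \<le> s * (\<epsilon> * (2 * (s * (norm a + norm b))) * norm b)"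
  proof -
    have "norm (G p - G q - M (p - q)) \<le> \<epsilon> * (norm (p - x) + norm (q - x))"
      using peano[of p q] pq small by auto
    also have "\<dots> \<le> \<epsilon> * (2 * (s * (norm a + norm b)))"
      using pq \<open>0 \<le> \<epsilon>\<close> by (intro mult_left_mono) auto
    finally show ?thesis using \<open>0 < s\<close> by (intro mult_left_mono mult_right_mono) auto
  qed
  finally show ?thesis
    using z(3) by (simp add: p_def q_def power2_eq_square algebra_simps)
qed

lemma second_difference_quotient_tendsto:
  fixes u :: "'a::real_inner \<Rightarrow> real"
  assumes S: "open S" "x \<in> S"
    and du: "\<And>y. y \<in> S \<Longrightarrow> (u has_derivative (\<lambda>h. G y \<bullet> h)) (at y)"
    and dG: "(G has_derivative M) (at x)"
  shows "((\<lambda>s. (u (x + s *\<^sub>R a + s *\<^sub>R b) - u (x + s *\<^sub>R b) - u (x + s *\<^sub>R a) + u x) / s\<^sup>2)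
           \<longlongrightarrow> M a \<bullet> b) (at_right 0)"
proof (rule tendstoI)
  fix e :: real assume "0 < e"
  define C where "C = 2 * (norm a + norm b) * norm b + 1"
  have C: "C > 0" unfolding C_def by (intro add_nonneg_pos mult_nonneg_nonneg) auto
  obtain \<delta> where \<delta>: "0 < \<delta>" "\<And>y z. norm (y - x) < \<delta> \<Longrightarrow> norm (z - x) < \<delta> \<Longrightarrow>
       norm (G y - G z - M (y - z)) \<le> e / C * (norm (y - x) + norm (z - x))"
    using has_derivative_increment_bound[OF dG] \<open>0 < e\<close> C by (metis divide_pos_pos)
  obtain \<rho> where \<rho>: "0 < \<rho>" "ball x \<rho> \<subseteq> S" using S openE by blast
  define s0 where "s0 = min \<delta> \<rho> / (norm a + norm b + 1)"
  have den: "norm a + norm b + 1 > 0" using norm_ge_zero[of a] norm_ge_zero[of b] by linarith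
  have "s0 > 0" using \<delta> \<rho> den by (simp add: s0_def)
  have "dist ((u (x + s *\<^sub>R a + s *\<^sub>R b) - u (x + s *\<^sub>R b) - u (x + s *\<^sub>R a) + u x) / s\<^sup>2) (M a \<bullet> b) < e"
    if s: "0 < s" "s < s0" for s
  proof -
    have "s * (norm a + norm b) \<le> s * (norm a + norm b + 1)" using s by simp
    also have "\<dots> < min \<delta> \<rho>" using s den by (simp add: s0_def pos_less_divide_eq)
    finally have small: "s * (norm a + norm b) < min \<delta> \<rho>" .
    have "\<bar>u (x + s *\<^sub>R a + s *\<^sub>R b) - u (x + s *\<^sub>R b) - u (x + s *\<^sub>R a) + u x - s\<^sup>2 * (M a \<bullet> b)\<bar>
        \<le> 2 * (e / C) * s\<^sup>2 * (norm a + norm b) * norm b"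
    proof (rule second_difference_estimate[where \<rho>="min \<delta> \<rho>" and G=G, OF _ has_derivative_linear[OF dG]])
      show "\<And>y. y \<in> ball x (min \<delta> \<rho>) \<Longrightarrow> (u has_derivative (\<bullet>) (G y)) (at y)"
        using du \<rho>(2) by auto
      show "\<And>y z. norm (y - x) < min \<delta> \<rho> \<Longrightarrow> norm (z - x) < min \<delta> \<rho> \<Longrightarrow>
          norm (G y - G z - M (y - z)) \<le> e / C * (norm (y - x) + norm (z - x))"
        using \<delta>(2) by simp
    qed (use \<open>0 < e\<close> C s small in auto)
    also have "\<dots> = s\<^sup>2 * e * ((C - 1) / C)"
      by (simp add: C_def field_simps)
    also have "\<dots> < s\<^sup>2 * e"
      using mult_strict_left_mono[of "(C - 1) / C" 1 "s\<^sup>2 * e"] s \<open>0 < e\<close> C by simp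
    finally have "\<bar>u (x + s *\<^sub>R a + s *\<^sub>R b) - u (x + s *\<^sub>R b) - u (x + s *\<^sub>R a) + u x - s\<^sup>2 * (M a \<bullet> b)\<bar>
        / s\<^sup>2 < e"
      using s by (simp add: pos_divide_less_eq mult.commute)
    moreover have "(u (x + s *\<^sub>R a + s *\<^sub>R b) - u (x + s *\<^sub>R b) - u (x + s *\<^sub>R a) + u x) / s\<^sup>2 - M a \<bullet> b
        = (u (x + s *\<^sub>R a + s *\<^sub>R b) - u (x + s *\<^sub>R b) - u (x + s *\<^sub>R a) + u x - s\<^sup>2 * (M a \<bullet> b)) / s\<^sup>2"
      using s by (simp add: diff_divide_distrib)
    ultimately show ?thesis by (simp add: dist_real_def abs_divide)
  qed
  then show "\<forall>\<^sub>F s in at_right 0. dist ((u (x + s *\<^sub>R a + s *\<^sub>R b) - u (x + s *\<^sub>R b) - u (x + s *\<^sub>R a) + u x) / s\<^sup>2) (M a \<bullet> b) < e"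
    using eventually_at_right_real[OF \<open>s0 > 0\<close>] by (auto elim: eventually_mono)
qed

lemma gradient_derivative_symmetric:
  fixes u :: "'a::real_inner \<Rightarrow> real"
  assumes "open S" "x \<in> S"
    and "\<And>y. y \<in> S \<Longrightarrow> (u has_derivative (\<lambda>h. G y \<bullet> h)) (at y)"
    and "(G has_derivative M) (at x)"
  shows "M a \<bullet> b = M b \<bullet> a"
proof (rule tendsto_unique[OF trivial_limit_at_right_real])
  show "((\<lambda>s. (u (x + s *\<^sub>R a + s *\<^sub>R b) - u (x + s *\<^sub>R b) - u (x + s *\<^sub>R a) + u x) / s\<^sup>2)
           \<longlongrightarrow> M a \<bullet> b) (at_right 0)"
    using second_difference_quotient_tendsto[OF assms] .
  show "((\<lambda>s. (u (x + s *\<^sub>R a + s *\<^sub>R b) - u (x + s *\<^sub>R b) - u (x + s *\<^sub>R a) + u x) / s\<^sup>2)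
           \<longlongrightarrow> M b \<bullet> a) (at_right 0)"
  proof -
    have "(\<lambda>s. (u (x + s *\<^sub>R b + s *\<^sub>R a) - u (x + s *\<^sub>R a) - u (x + s *\<^sub>R b) + u x) / s\<^sup>2)
        = (\<lambda>s. (u (x + s *\<^sub>R a + s *\<^sub>R b) - u (x + s *\<^sub>R b) - u (x + s *\<^sub>R a) + u x) / s\<^sup>2)"
      by (simp add: fun_eq_iff algebra_simps)
    with second_difference_quotient_tendsto[OF assms, of b a] show ?thesis by simp
  qed
qed

lemma convex_on_gradient_inequality:
  fixes f :: "'a::real_inner \<Rightarrow> real"
  assumes conv: "convex_on U f" and U: "open U" "y \<in> U" "z \<in> U"
    and df: "(f has_derivative (\<lambda>h. G \<bullet> h)) (at y)"
  shows "f y + G \<bullet> (z - y) \<le> f z"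
proof -
  define p where "p t = y + t *\<^sub>R (z - y)" for t
  define A where "A = p -` U"
  have p_comb: "p ((1 - t) * s1 + t * s2) = (1 - t) *\<^sub>R p s1 + t *\<^sub>R p s2" for t s1 s2
    by (simp add: p_def algebra_simps)
  have A01: "0 \<in> A" "1 \<in> A" using U by (auto simp: A_def p_def)
  have "open A" unfolding A_def p_def
    by (intro continuous_open_vimage U(1)) (auto intro!: continuous_intros)
  have "convex A"
  proof (rule convexI)
    fix s1 s2 \<mu> \<kappa> :: real assume "s1 \<in> A" "s2 \<in> A" "0 \<le> \<mu>" "0 \<le> \<kappa>" "\<mu> + \<kappa> = 1"
    moreover from \<open>\<mu> + \<kappa> = 1\<close> have "\<mu> = 1 - \<kappa>" by simp
    ultimately show "\<mu> *\<^sub>R s1 + \<kappa> *\<^sub>R s2 \<in> A"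
      using convexD[OF convex_on_imp_convex[OF conv], of "p s1" "p s2" \<mu> \<kappa>] p_comb[of \<kappa> s1 s2]
      by (simp add: A_def)
  qed
  have "convex_on A (f \<circ> p)"
  proof (rule convex_onI[OF _ \<open>convex A\<close>])
    fix t s1 s2 :: real assume "0 < t" "t < 1" "s1 \<in> A" "s2 \<in> A"
    then show "(f \<circ> p) ((1 - t) *\<^sub>R s1 + t *\<^sub>R s2) \<le> (1 - t) * (f \<circ> p) s1 + t * (f \<circ> p) s2"
      using convex_onD[OF conv, of t "p s1" "p s2"] p_comb[of t s1 s2] by (simp add: A_def)
  qed
  moreover have "((f \<circ> p) has_real_derivative G \<bullet> (z - y)) (at 0 within A)"
    using has_real_derivative_along_line[of f "\<lambda>h. G \<bullet> h" y 0 "z - y"] df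
    by (simp add: p_def o_def has_field_derivative_at_within)
  ultimately have "G \<bullet> (z - y) * (1 - 0) \<le> (f \<circ> p) 1 - (f \<circ> p) 0"
    using convex_on_imp_above_tangent[of A "f \<circ> p" 0 1] convex_connected[OF \<open>convex A\<close>]
      interior_open[OF \<open>open A\<close>] A01 by simp
  then show ?thesis by (simp add: p_def)
qed

lemma convex_on_gradient_monotone:
  fixes f :: "'a::real_inner \<Rightarrow> real"
  assumes "convex_on U f" "open U" "y \<in> U" "z \<in> U"
    and "\<And>w. w \<in> U \<Longrightarrow> (f has_derivative (\<lambda>h. g w \<bullet> h)) (at w)"
  shows "0 \<le> (g z - g y) \<bullet> (z - y)"
  using convex_on_gradient_inequality[of U f y z "g y"] convex_on_gradient_inequality[of U f z y "g z"] assms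
  by (simp add: inner_diff_left inner_diff_right inner_commute)

lemma abs_diff_le_of_derivative_bound:
  fixes F B :: "real \<Rightarrow> real"
  assumes "a \<le> b"
    and "\<And>s. a \<le> s \<Longrightarrow> s \<le> b \<Longrightarrow> (F has_real_derivative F' s) (at s)"
    and "\<And>s. a \<le> s \<Longrightarrow> s \<le> b \<Longrightarrow> (B has_real_derivative B' s) (at s)"
    and "\<And>s. a \<le> s \<Longrightarrow> s \<le> b \<Longrightarrow> \<bar>F' s\<bar> \<le> B' s"
  shows "\<bar>F b - F a\<bar> \<le> B b - B a"
proof -
  have "B a - F a \<le> B b - F b"
    by (rule DERIV_nonneg_imp_nondecreasing[OF assms(1)])
      (use assms in \<open>fastforce intro: DERIV_diff\<close>)
  moreover have "B a + F a \<le> B b + F b"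
    by (rule DERIV_nonneg_imp_nondecreasing[OF assms(1)])
      (use assms in \<open>fastforce intro: DERIV_add\<close>)
  ultimately show ?thesis by linarith
qed

lemma sqrt_growth_bound:
  fixes \<phi> \<phi>' :: "real \<Rightarrow> real"
  assumes t: "0 \<le> t" "t * sqrt (\<phi> 0) < 1"
    and pos: "\<And>s. 0 \<le> s \<Longrightarrow> s \<le> t \<Longrightarrow> 0 < \<phi> s"
    and deriv: "\<And>s. 0 \<le> s \<Longrightarrow> s \<le> t \<Longrightarrow> (\<phi> has_real_derivative \<phi>' s) (at s)"
    and bound: "\<And>s. 0 \<le> s \<Longrightarrow> s \<le> t \<Longrightarrow> \<phi>' s \<le> 2 * \<phi> s * sqrt (\<phi> s)"
  shows "sqrt (\<phi> t) \<le> sqrt (\<phi> 0) / (1 - t * sqrt (\<phi> 0))"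
proof -
  define r where "r = sqrt (\<phi> 0)"
  have r: "r > 0" using pos[of 0] t by (simp add: r_def)
  have "1 / sqrt (\<phi> 0) + 0 \<le> 1 / sqrt (\<phi> t) + t"
  proof (rule DERIV_nonneg_imp_nondecreasing[OF t(1)])
    fix s assume s: "0 \<le> s" "s \<le> t"
    have "((\<lambda>s. 1 / sqrt (\<phi> s) + s) has_real_derivative 1 - \<phi>' s / (2 * \<phi> s * sqrt (\<phi> s))) (at s)"
      using pos[OF s] by (auto intro!: derivative_eq_intros deriv[OF s] simp: field_simps)
    moreover have "\<phi>' s / (2 * \<phi> s * sqrt (\<phi> s)) \<le> 1"
      using bound[OF s] pos[OF s] by (simp add: divide_le_eq_1)
    ultimately show "\<exists>y. ((\<lambda>s. 1 / sqrt (\<phi> s) + s) has_real_derivative y) (at s) \<and> 0 \<le> y"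
      by force
  qed
  then have "1 / r - t \<le> 1 / sqrt (\<phi> t)" by (simp add: r_def)
  moreover have "1 / r - t = (1 - t * r) / r" using r by (simp add: field_simps)
  ultimately have "(1 - t * r) / r \<le> 1 / sqrt (\<phi> t)" by simp
  moreover have "0 < 1 - t * r" using t by (simp add: r_def)
  moreover have "0 < sqrt (\<phi> t)" using pos[of t] t by simp
  ultimately show ?thesis using r unfolding r_def[symmetric] by (simp add: field_simps)
qed

lemma cubic_distortion_lower:
  fixes \<psi> \<psi>' :: "real \<Rightarrow> real"
  assumes t: "0 \<le> t" and c: "\<And>s. 0 \<le> s \<Longrightarrow> s \<le> t \<Longrightarrow> 0 < 1 - s * r"
    and deriv: "\<And>s. 0 \<le> s \<Longrightarrow> s \<le> t \<Longrightarrow> (\<psi> has_real_derivative \<psi>' s) (at s)"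
    and bound: "\<And>s. 0 \<le> s \<Longrightarrow> s \<le> t \<Longrightarrow> (1 - s * r) * \<bar>\<psi>' s\<bar> \<le> 3 * r * \<psi> s"
  shows "(1 - t * r) ^ 3 * \<psi> 0 \<le> \<psi> t"
proof -
  have "\<psi> 0 / (1 - 0 * r) ^ 3 \<le> \<psi> t / (1 - t * r) ^ 3"
  proof (rule DERIV_nonneg_imp_nondecreasing[OF t])
    fix s assume s: "0 \<le> s" "s \<le> t"
    have "((\<lambda>s. (1 - s * r) ^ 3) has_real_derivative - 3 * r * (1 - s * r)\<^sup>2) (at s)"
      by (auto intro!: derivative_eq_intros simp: power2_eq_square)
    from DERIV_divide[OF deriv[OF s] this]
    have "((\<lambda>s. \<psi> s / (1 - s * r) ^ 3) has_real_derivative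
        (\<psi>' s * (1 - s * r) ^ 3 - \<psi> s * (- 3 * r * (1 - s * r)\<^sup>2)) / ((1 - s * r) ^ 3 * (1 - s * r) ^ 3)) (at s)"
      using c[OF s] by simp
    moreover have "\<psi>' s * (1 - s * r) ^ 3 - \<psi> s * (- 3 * r * (1 - s * r)\<^sup>2)
        = (1 - s * r)\<^sup>2 * ((1 - s * r) * \<psi>' s + 3 * r * \<psi> s)"
      by (simp add: power2_eq_square power3_eq_cube algebra_simps)
    moreover have "- ((1 - s * r) * \<psi>' s) \<le> (1 - s * r) * \<bar>\<psi>' s\<bar>"
      using mult_left_mono[of "- \<psi>' s" "\<bar>\<psi>' s\<bar>" "1 - s * r"] c[OF s] by simp
    ultimately show "\<exists>y. ((\<lambda>s. \<psi> s / (1 - s * r) ^ 3) has_real_derivative y) (at s) \<and> 0 \<le> y"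
      using bound[OF s] c[OF s] by (intro exI conjI) (auto intro!: divide_nonneg_nonneg mult_nonneg_nonneg)
  qed
  then show ?thesis using c[of t] t by (simp add: le_divide_eq mult.commute)
qed

lemma cubic_distortion_upper:
  fixes \<psi> \<psi>' :: "real \<Rightarrow> real"
  assumes t: "0 \<le> t" and c: "\<And>s. 0 \<le> s \<Longrightarrow> s \<le> t \<Longrightarrow> 0 < 1 - s * r"
    and deriv: "\<And>s. 0 \<le> s \<Longrightarrow> s \<le> t \<Longrightarrow> (\<psi> has_real_derivative \<psi>' s) (at s)"
    and bound: "\<And>s. 0 \<le> s \<Longrightarrow> s \<le> t \<Longrightarrow> (1 - s * r) * \<bar>\<psi>' s\<bar> \<le> 3 * r * \<psi> s"
  shows "\<psi> t * (1 - t * r) ^ 3 \<le> \<psi> 0"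
proof -
  have "\<psi> t * (1 - t * r) ^ 3 \<le> \<psi> 0 * (1 - 0 * r) ^ 3"
  proof (rule DERIV_nonpos_imp_nonincreasing[OF t])
    fix s assume s: "0 \<le> s" "s \<le> t"
    have "((\<lambda>s. \<psi> s * (1 - s * r) ^ 3) has_real_derivative
        (1 - s * r)\<^sup>2 * ((1 - s * r) * \<psi>' s - 3 * r * \<psi> s)) (at s)"
      by (auto intro!: derivative_eq_intros deriv[OF s] simp: power2_eq_square power3_eq_cube algebra_simps)
    moreover have "(1 - s * r) * \<psi>' s \<le> (1 - s * r) * \<bar>\<psi>' s\<bar>"
      using mult_left_mono[of "\<psi>' s" "\<bar>\<psi>' s\<bar>" "1 - s * r"] c[OF s] by simp
    ultimately show "\<exists>y. ((\<lambda>s. \<psi> s * (1 - s * r) ^ 3) has_real_derivative y) (at s) \<and> y \<le> 0"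
      using bound[OF s] by (intro exI conjI) (auto intro!: mult_nonneg_nonpos)
  qed
  then show ?thesis by simp
qed

lemma bounded_above_of_second_derivative_bound:
  fixes \<phi> \<phi>' \<phi>'' :: "real \<Rightarrow> real"
  assumes "t0 \<le> 1" "0 \<le> B"
    and "\<And>s. 0 \<le> s \<Longrightarrow> s < t0 \<Longrightarrow> (\<phi> has_real_derivative \<phi>' s) (at s)"
    and "\<And>s. 0 \<le> s \<Longrightarrow> s < t0 \<Longrightarrow> (\<phi>' has_real_derivative \<phi>'' s) (at s)"
    and "\<And>s. 0 \<le> s \<Longrightarrow> s < t0 \<Longrightarrow> \<phi>'' s \<le> B"
    and s: "0 \<le> s" "s < t0"
  shows "\<phi> s \<le> \<phi> 0 + \<bar>\<phi>' 0\<bar> + B"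
proof -
  have "\<phi>' u - B * u \<le> \<phi>' 0 - B * 0" if u: "0 \<le> u" "u < t0" for u
    by (rule DERIV_nonpos_imp_nonincreasing[OF u(1)])
      (use assms u in \<open>force intro!: DERIV_diff DERIV_cmult_right[of "\<lambda>x. x" 1, simplified]\<close>)
  moreover have "B * u \<le> B" if "0 \<le> u" "u < t0" for u
    using that assms(1,2) by (intro mult_left_le) auto
  ultimately have slope: "\<phi>' u \<le> \<bar>\<phi>' 0\<bar> + B" if "0 \<le> u" "u < t0" for u
    using that abs_ge_self[of "\<phi>' 0"] by fastforce
  have "\<phi> s - (\<bar>\<phi>' 0\<bar> + B) * s \<le> \<phi> 0 - (\<bar>\<phi>' 0\<bar> + B) * 0"
    by (rule DERIV_nonpos_imp_nonincreasing[OF s(1)])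
      (use assms s slope in \<open>force intro!: DERIV_diff DERIV_cmult_right[of "\<lambda>x. x" 1, simplified]\<close>)
  moreover have "(\<bar>\<phi>' 0\<bar> + B) * s \<le> \<bar>\<phi>' 0\<bar> + B"
    using s assms(1,2) by (intro mult_left_le) auto
  ultimately show ?thesis by simp
qed

section \<open>Numerical estimates\<close>

lemma powr_three_halves: "0 \<le> (x::real) \<Longrightarrow> x powr (3/2) = x * sqrt x"
  using powr_add[of x 1 "1/2"] by (cases "x = 0") (simp_all add: powr_half_sqrt)

text \<open>\<open>remainder_coeff r = \<integral>\<^sub>0\<^sup>1 r ((1 - s r)\<^sup>-\<^sup>3 - 1) ds\<close>, the integrated bound on the change of the
  Hessian along a step of local length \<open>r\<close>.\<close>
definition remainder_coeff :: "real \<Rightarrow> real" where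
  "remainder_coeff r = 1 / (2 * (1 - r)\<^sup>2) - 1 / 2 - r"

lemma remainder_coeff_eq: "r < 1 \<Longrightarrow> remainder_coeff r = r\<^sup>2 * (3 - 2 * r) / (2 * (1 - r)\<^sup>2)"
  by (simp add: remainder_coeff_def field_simps) (simp add: power2_eq_square algebra_simps)

lemma remainder_coeff_nonneg: "0 \<le> r \<Longrightarrow> r < 1 \<Longrightarrow> 0 \<le> remainder_coeff r"
  by (simp add: remainder_coeff_eq)

lemma remainder_coeff_le:
  assumes "0 \<le> r" "r \<le> 1 / 4"
  shows "remainder_coeff r \<le> 8 / 3 * r\<^sup>2"
proof -
  have "(3 / 4)\<^sup>2 \<le> (1 - r)\<^sup>2" using assms by (intro power_mono) auto
  have "remainder_coeff r = r\<^sup>2 * (3 - 2 * r) / (2 * (1 - r)\<^sup>2)"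
    using assms by (simp add: remainder_coeff_eq)
  also have "\<dots> \<le> r\<^sup>2 * 3 / (2 * (3 / 4)\<^sup>2)"
    using assms \<open>(3 / 4)\<^sup>2 \<le> (1 - r)\<^sup>2\<close> by (intro frac_le mult_left_mono) auto
  also have "\<dots> = 8 / 3 * r\<^sup>2" by (simp add: power2_eq_square)
  finally show ?thesis .
qed

lemma predictor_term_le:
  fixes \<eta> \<alpha> r :: real
  assumes "0 < \<eta>" "\<eta> \<le> 1 / 4" "0 \<le> \<alpha>" "\<alpha> \<le> 1" "0 \<le> r" "r \<le> \<alpha> * \<eta>"
  shows "((1 - \<alpha>) * \<eta> + remainder_coeff r) / (1 - r)\<^sup>2 \<le> 3 / 2 * \<eta>"
proof -
  have "r \<le> \<eta>" using mult_left_le_one_le[of \<eta> \<alpha>] assms by linarith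
  have "r * r \<le> r * (1 / 4)" using assms \<open>r \<le> \<eta>\<close> by (intro mult_left_mono) auto
  have "\<eta> * r \<le> 1 / 4 * r" using assms by (intro mult_right_mono) auto
  have "remainder_coeff r \<le> 8 / 3 * (r * r)"
    using remainder_coeff_le[of r] assms \<open>r \<le> \<eta>\<close> by (simp add: power2_eq_square)
  have "0 \<le> \<eta> * (r * r)" using assms by simp
  have "3 / 2 * \<eta> * (1 - r)\<^sup>2 = 3 / 2 * \<eta> - 3 * (\<eta> * r) + 3 / 2 * (\<eta> * (r * r))"
    by (simp add: power2_eq_square algebra_simps)
  moreover have "(1 - \<alpha>) * \<eta> = \<eta> - \<alpha> * \<eta>" by (simp add: algebra_simps)
  ultimately have "(1 - \<alpha>) * \<eta> + remainder_coeff r \<le> 3 / 2 * \<eta> * (1 - r)\<^sup>2"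
    using assms \<open>r \<le> \<eta>\<close> \<open>r * r \<le> r * (1 / 4)\<close> \<open>\<eta> * r \<le> 1 / 4 * r\<close>
      \<open>remainder_coeff r \<le> 8 / 3 * (r * r)\<close> \<open>0 \<le> \<eta> * (r * r)\<close> by linarith
  moreover have "0 < (1 - r)\<^sup>2" using assms \<open>r \<le> \<eta>\<close> by simp
  ultimately show ?thesis by (simp add: divide_le_eq)
qed

lemma centering_term_le:
  fixes \<eta> \<nu> :: real
  assumes "0 < \<eta>" "\<eta> \<le> 1 / 2" "0 \<le> \<nu>"
  shows "(\<eta> / 2) / (sqrt \<nu> + 1) * (sqrt \<nu> + 2 * \<eta>) \<le> \<eta> / 2"
proof -
  have "0 < sqrt \<nu> + 1" using assms by (simp add: add_nonneg_pos)
  have "(\<eta> / 2) / (sqrt \<nu> + 1) * (sqrt \<nu> + 2 * \<eta>) = \<eta> / 2 * (sqrt \<nu> + 2 * \<eta>) / (sqrt \<nu> + 1)"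
    by simp
  also have "\<dots> \<le> \<eta> / 2 * (sqrt \<nu> + 1) / (sqrt \<nu> + 1)"
    using assms \<open>0 < sqrt \<nu> + 1\<close> by (intro divide_right_mono mult_left_mono) auto
  also have "\<dots> = \<eta> / 2" using \<open>0 < sqrt \<nu> + 1\<close> by (intro nonzero_mult_div_cancel_right) simp
  finally show ?thesis .
qed

lemma short_step_inequality:
  fixes \<eta> \<alpha> r \<nu> \<tau> :: real
  assumes "0 < \<eta>" "\<eta> \<le> 1 / 4" "0 \<le> \<alpha>" "\<alpha> \<le> 1" "0 \<le> r" "r \<le> \<alpha> * \<eta>" "0 \<le> \<nu>" "0 \<le> \<tau>"
  defines "\<theta> \<equiv> (\<eta> / 2) / (sqrt \<nu> + 1)"
  shows "\<tau> * (((1 - \<alpha>) * \<eta> + remainder_coeff r) / (1 - r)\<^sup>2) + \<theta> * \<tau> * sqrt \<nu>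
    \<le> 2 * \<eta> * ((1 - \<theta>) * \<tau>)"
proof -
  have "\<theta> * (sqrt \<nu> + 2 * \<eta>) \<le> \<eta> / 2"
    unfolding \<theta>_def by (rule centering_term_le) (use assms in auto)
  then have "\<theta> * sqrt \<nu> \<le> \<eta> / 2 - 2 * \<eta> * \<theta>" by (simp add: algebra_simps)
  moreover have "((1 - \<alpha>) * \<eta> + remainder_coeff r) / (1 - r)\<^sup>2 \<le> 3 / 2 * \<eta>"
    using predictor_term_le assms by simp
  ultimately have "\<tau> * (((1 - \<alpha>) * \<eta> + remainder_coeff r) / (1 - r)\<^sup>2) + \<tau> * (\<theta> * sqrt \<nu>)
      \<le> \<tau> * (3 / 2 * \<eta>) + \<tau> * (\<eta> / 2 - 2 * \<eta> * \<theta>)"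
    using \<open>0 \<le> \<tau>\<close> by (intro add_mono mult_left_mono) auto
  then show ?thesis by (simp add: algebra_simps)
qed

section \<open>Self-concordant functions\<close>

locale self_concordant =
  fixes U :: "(real^'n) set" and f :: "real^'n \<Rightarrow> real" and g :: "real^'n \<Rightarrow> real^'n"
    and H :: "real^'n \<Rightarrow> real^'n^'n" and D3 :: "real^'n \<Rightarrow> real^'n \<Rightarrow> real^'n^'n"
  assumes open_domain: "open U"
    and convex: "convex_on U f"
    and has_derivative_f: "\<And>y. y \<in> U \<Longrightarrow> (f has_derivative (\<lambda>h. g y \<bullet> h)) (at y)"
    and has_derivative_g: "\<And>y. y \<in> U \<Longrightarrow> (g has_derivative (\<lambda>h. H y *v h)) (at y)"
    and has_derivative_H: "\<And>y. y \<in> U \<Longrightarrow> (H has_derivative D3 y) (at y)"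
    and self_concordance: "\<And>y h. y \<in> U \<Longrightarrow> \<bar>h \<bullet> (D3 y h *v h)\<bar> \<le> 2 * (h \<bullet> (H y *v h)) powr (3/2)"
    and invertible_hessian: "\<And>y. y \<in> U \<Longrightarrow> invertible (H y)"
begin

lemma hessian_symmetric: "y \<in> U \<Longrightarrow> symmetric_matrix (H y)"
  using gradient_derivative_symmetric[OF open_domain _ has_derivative_f has_derivative_g]
  by (simp add: symmetric_matrix_def inner_commute)

lemma hessian_pos_semidef:
  assumes y: "y \<in> U"
  shows "pos_semidef (H y)"
  unfolding pos_semidef_def
proof
  fix h
  define A where "A = (\<lambda>t. y + t *\<^sub>R h) -` U"
  have "open A" unfolding A_def
    by (intro continuous_open_vimage open_domain) (auto intro!: continuous_intros)
  then have "0 \<in> interior A" using y by (simp add: A_def interior_open)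
  moreover have "mono_on A (\<lambda>t. h \<bullet> g (y + t *\<^sub>R h))"
  proof (rule mono_onI)
    fix s t assume "s \<in> A" "t \<in> A" "s \<le> t"
    then have "0 \<le> (g (y + t *\<^sub>R h) - g (y + s *\<^sub>R h)) \<bullet> ((t - s) *\<^sub>R h)"
      using convex_on_gradient_monotone[OF convex open_domain, of "y + s *\<^sub>R h" "y + t *\<^sub>R h" g]
        has_derivative_f by (simp add: A_def algebra_simps)
    with \<open>s \<le> t\<close> show "h \<bullet> g (y + s *\<^sub>R h) \<le> h \<bullet> g (y + t *\<^sub>R h)"
      by (cases "s = t") (auto simp: inner_diff_left inner_commute[of h] zero_le_mult_iff)
  qed
  moreover have "((\<lambda>t. h \<bullet> g (y + t *\<^sub>R h)) has_real_derivative h \<bullet> (H y *v h)) (at 0)"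
    using has_real_derivative_along_line[of "\<lambda>z. h \<bullet> g z" "\<lambda>k. h \<bullet> (H y *v k)" y 0 h] y
    by (auto intro!: derivative_eq_intros has_derivative_g)
  ultimately show "0 \<le> quad_form (H y) h"
    using mono_on_imp_deriv_nonneg by (fastforce simp: quad_form_def)
qed

lemma hessian_pos_def:
  assumes y: "y \<in> U" and "h \<noteq> 0"
  shows "0 < quad_form (H y) h"
proof (rule ccontr)
  assume "\<not> 0 < quad_form (H y) h"
  then have "quad_form (H y) h = 0"
    using hessian_pos_semidef[OF y] by (simp add: pos_semidef_def order_less_le)
  then have "((H y *v h) \<bullet> (H y *v h))\<^sup>2 \<le> 0"
    using quad_form_Cauchy_Schwarz[OF hessian_symmetric hessian_pos_semidef, OF y y, of "H y *v h" h]
    by simp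
  then have "H y *v h = H y *v 0" by simp
  with inj_matrix_vector_mult[OF invertible_hessian[OF y]] \<open>h \<noteq> 0\<close> show False
    by (meson injD)
qed

lemma quad_form_hessian_nonneg: "y \<in> U \<Longrightarrow> 0 \<le> quad_form (H y) h"
  using hessian_pos_semidef by (simp add: pos_semidef_def)

lemma third_derivative_linear: "y \<in> U \<Longrightarrow> linear (D3 y)"
  using has_derivative_H has_derivative_linear by blast

lemma third_derivative_symmetric:
  assumes y: "y \<in> U"
  shows "symmetric_matrix (D3 y a)"
  unfolding symmetric_matrix_def
proof (intro allI)
  fix b c
  let ?D = "\<lambda>k. b \<bullet> (D3 y k *v c) - c \<bullet> (D3 y k *v b)"
  have "((\<lambda>z. b \<bullet> (H z *v c) - c \<bullet> (H z *v b)) has_derivative ?D) (at y)"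
    by (intro has_derivative_diff has_derivative_bilinear_matrix has_derivative_H y)
  then have "((\<lambda>z. 0::real) has_derivative ?D) (at y)"
    using open_domain y by (rule has_derivative_transform_within_open)
      (use hessian_symmetric in \<open>auto simp: symmetric_matrix_def\<close>)
  then have "?D = (\<lambda>k. 0)"
    using has_derivative_unique has_derivative_const by blast
  then show "b \<bullet> (D3 y a *v c) = c \<bullet> (D3 y a *v b)" by (metis eq_iff_diff_eq_0)
qed

lemma third_derivative_swap:
  assumes y: "y \<in> U"
  shows "(D3 y a *v c) \<bullet> b = (D3 y b *v c) \<bullet> a"
proof (rule gradient_derivative_symmetric[OF open_domain y])
  fix z assume z: "z \<in> U"
  have "((\<lambda>z. c \<bullet> g z) has_derivative (\<lambda>h. c \<bullet> (H z *v h))) (at z)"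
    using z by (auto intro!: derivative_eq_intros has_derivative_g)
  moreover have "(\<lambda>h. c \<bullet> (H z *v h)) = (\<lambda>h. (H z *v c) \<bullet> h)"
    using hessian_symmetric[OF z] by (auto simp: symmetric_matrix_def fun_eq_iff inner_commute)
  ultimately show "((\<lambda>z. c \<bullet> g z) has_derivative (\<lambda>h. (H z *v c) \<bullet> h)) (at z)" by simp
next
  show "((\<lambda>z. H z *v c) has_derivative (\<lambda>k. D3 y k *v c)) (at y)"
    by (rule has_derivative_matrix_vector_mult_left[OF has_derivative_H[OF y]])
qed

lemma cubic_form_le:
  "y \<in> U \<Longrightarrow> \<bar>v \<bullet> (D3 y v *v v)\<bar> \<le> 2 * quad_form (H y) v * local_norm H y v"
  using self_concordance[of y v] powr_three_halves[OF quad_form_hessian_nonneg, of y v]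
  by (simp add: quad_form_def)

lemma cubic_form_expand:
  assumes y: "y \<in> U"
  shows "(h + l *\<^sub>R d) \<bullet> (D3 y (h + l *\<^sub>R d) *v (h + l *\<^sub>R d)) =
    h \<bullet> (D3 y h *v h) + 3 * l * (h \<bullet> (D3 y d *v h)) + 3 * l\<^sup>2 * (h \<bullet> (D3 y d *v d))
    + l ^ 3 * (d \<bullet> (D3 y d *v d))"
proof -
  have lin: "D3 y (h + l *\<^sub>R d) = D3 y h + l *\<^sub>R D3 y d"
    using linear_add[OF third_derivative_linear[OF y]] linear_scale[OF third_derivative_linear[OF y]]
    by simp
  have sym: "symmetric_matrix (D3 y h)" "symmetric_matrix (D3 y d)"
    using third_derivative_symmetric[OF y] by auto
  have swap: "(D3 y h *v h) \<bullet> d = (D3 y d *v h) \<bullet> h" "(D3 y h *v d) \<bullet> d = (D3 y d *v d) \<bullet> h"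
    using third_derivative_swap[OF y] by auto
  have "h \<bullet> (D3 y h *v d) = h \<bullet> (D3 y d *v h)" "d \<bullet> (D3 y h *v h) = h \<bullet> (D3 y d *v h)"
    "d \<bullet> (D3 y h *v d) = h \<bullet> (D3 y d *v d)" "d \<bullet> (D3 y d *v h) = h \<bullet> (D3 y d *v d)"
    using swap sym unfolding symmetric_matrix_def by (simp_all add: inner_commute)
  then show ?thesis
    unfolding lin
    by (simp add: matrix_vector_mult_add_rdistrib matrix_vector_right_distrib
        scaleR_matrix_vector_assoc[symmetric] matrix_vector_mult_scaleR inner_add_left inner_add_right
        algebra_simps power2_eq_square power3_eq_cube)
qed

lemma cubic_form_shifted_le:
  assumes y: "y \<in> U"
  shows "\<bar>(h + l *\<^sub>R d) \<bullet> (D3 y (h + l *\<^sub>R d) *v (h + l *\<^sub>R d))\<bar>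
    \<le> 2 * quad_form (H y) (h + l *\<^sub>R d) * (local_norm H y h + \<bar>l\<bar> * local_norm H y d)"
proof -
  have "local_norm H y (h + l *\<^sub>R d) \<le> local_norm H y h + \<bar>l\<bar> * local_norm H y d"
    using sqrt_quad_form_triangle[OF hessian_symmetric hessian_pos_semidef, OF y y, of h "l *\<^sub>R d"]
    by (simp add: sqrt_quad_form_scaleR)
  with cubic_form_le[OF y, of "h + l *\<^sub>R d"] quad_form_hessian_nonneg[OF y, of "h + l *\<^sub>R d"]
  show ?thesis by (meson mult_left_mono order_trans zero_le_mult_iff zero_le_numeral)
qed

lemma cubic_form_polarization:
  assumes y: "y \<in> U"
  shows "6 * l * (h \<bullet> (D3 y d *v h)) = (h + l *\<^sub>R d) \<bullet> (D3 y (h + l *\<^sub>R d) *v (h + l *\<^sub>R d))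
    - (h - l *\<^sub>R d) \<bullet> (D3 y (h - l *\<^sub>R d) *v (h - l *\<^sub>R d)) - 2 * l ^ 3 * (d \<bullet> (D3 y d *v d))"
proof -
  have "(h - l *\<^sub>R d) \<bullet> (D3 y (h - l *\<^sub>R d) *v (h - l *\<^sub>R d)) = h \<bullet> (D3 y h *v h)
      - 3 * l * (h \<bullet> (D3 y d *v h)) + 3 * l\<^sup>2 * (h \<bullet> (D3 y d *v d)) - l ^ 3 * (d \<bullet> (D3 y d *v d))"
    using cubic_form_expand[OF y, of h "- l" d] by simp
  then show ?thesis unfolding cubic_form_expand[OF y] by simp
qed

lemma abs_polarization_le:
  assumes y: "y \<in> U" and "0 \<le> l"
  shows "6 * l * \<bar>h \<bullet> (D3 y d *v h)\<bar> \<le> 2 * (local_norm H y h + l * local_norm H y d)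
      * (quad_form (H y) (h + l *\<^sub>R d) + quad_form (H y) (h - l *\<^sub>R d)) + 4 * (l * local_norm H y d) ^ 3"
proof -
  let ?P = "\<lambda>v. v \<bullet> (D3 y v *v v)" and ?n = "local_norm H y h + l * local_norm H y d"
  have "\<bar>?P d\<bar> \<le> 2 * local_norm H y d ^ 3"
    using cubic_form_le[OF y, of d] quad_form_hessian_nonneg[OF y, of d]
    by (simp add: power3_eq_cube)
  then have Pd: "\<bar>2 * l ^ 3 * ?P d\<bar> \<le> 4 * (l * local_norm H y d) ^ 3"
    using \<open>0 \<le> l\<close> mult_left_mono[of "\<bar>?P d\<bar>" "2 * local_norm H y d ^ 3" "2 * l ^ 3"]
    by (simp add: abs_mult power_mult_distrib)
  have "\<bar>?P (h + l *\<^sub>R d)\<bar> \<le> 2 * quad_form (H y) (h + l *\<^sub>R d) * ?n"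
    "\<bar>?P (h - l *\<^sub>R d)\<bar> \<le> 2 * quad_form (H y) (h - l *\<^sub>R d) * ?n"
    using cubic_form_shifted_le[OF y, of h l d] cubic_form_shifted_le[OF y, of h "- l" d] \<open>0 \<le> l\<close>
    by simp_all
  with Pd have "\<bar>?P (h + l *\<^sub>R d)\<bar> + \<bar>?P (h - l *\<^sub>R d)\<bar> + \<bar>2 * l ^ 3 * ?P d\<bar>
      \<le> 2 * quad_form (H y) (h + l *\<^sub>R d) * ?n + 2 * quad_form (H y) (h - l *\<^sub>R d) * ?n
        + 4 * (l * local_norm H y d) ^ 3"
    by linarith
  moreover have "6 * l * \<bar>h \<bullet> (D3 y d *v h)\<bar> = \<bar>?P (h + l *\<^sub>R d) - ?P (h - l *\<^sub>R d) - 2 * l ^ 3 * ?P d\<bar>"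
    unfolding cubic_form_polarization[OF y, of l h d, symmetric] using \<open>0 \<le> l\<close> by (simp add: abs_mult)
  moreover have "\<bar>?P (h + l *\<^sub>R d) - ?P (h - l *\<^sub>R d) - 2 * l ^ 3 * ?P d\<bar>
      \<le> \<bar>?P (h + l *\<^sub>R d)\<bar> + \<bar>?P (h - l *\<^sub>R d)\<bar> + \<bar>2 * l ^ 3 * ?P d\<bar>"
    by (rule order_trans[OF abs_triangle_ineq4 add_right_mono[OF abs_triangle_ineq4]])
  ultimately show ?thesis by (simp add: algebra_simps)
qed

text \<open>The constant 3 is not optimal (2 is), but it suffices for the Hessian comparison below.\<close>
lemma third_derivative_mixed_bound:
  assumes y: "y \<in> U"
  shows "\<bar>h \<bullet> (D3 y d *v h)\<bar> \<le> 3 * local_norm H y d * quad_form (H y) h"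
proof (cases "h = 0 \<or> d = 0")
  case True
  then show ?thesis
    using linear_0[OF third_derivative_linear[OF y]] quad_form_hessian_nonneg[OF y]
    by (auto simp: quad_form_def)
next
  case False
  define nh where "nh = local_norm H y h"
  define nd where "nd = local_norm H y d"
  have "nh > 0" "nd > 0" using hessian_pos_def[OF y] False by (simp_all add: nh_def nd_def)
  define l where "l = nh / (2 * nd)"
  have "l > 0" "l * nd = nh / 2" using \<open>nh > 0\<close> \<open>nd > 0\<close> by (simp_all add: l_def)
  have "quad_form (H y) (h + l *\<^sub>R d) + quad_form (H y) (h - l *\<^sub>R d) = 2 * nh\<^sup>2 + 2 * (l * nd)\<^sup>2"
    using quad_form_parallelogram[OF hessian_symmetric[OF y], of h "l *\<^sub>R d"] quad_form_scaleR[of "H y" l d]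
      quad_form_hessian_nonneg[OF y] by (simp add: nh_def nd_def power_mult_distrib)
  then have "6 * l * \<bar>h \<bullet> (D3 y d *v h)\<bar> \<le> 2 * (nh + nh / 2) * (2 * nh\<^sup>2 + 2 * (nh / 2)\<^sup>2) + 4 * (nh / 2) ^ 3"
    using abs_polarization_le[OF y less_imp_le[OF \<open>l > 0\<close>], of h d, folded nh_def nd_def]
    unfolding \<open>l * nd = nh / 2\<close> by simp
  also have "\<dots> = 8 * nh ^ 3" by (simp add: power2_eq_square power3_eq_cube algebra_simps)
  finally have "6 * l * \<bar>h \<bullet> (D3 y d *v h)\<bar> \<le> 8 * nh ^ 3" .
  then have "\<bar>h \<bullet> (D3 y d *v h)\<bar> \<le> 8 / 3 * nd * nh\<^sup>2"
    using \<open>nh > 0\<close> \<open>nd > 0\<close> by (simp add: l_def field_simps power2_eq_square power3_eq_cube)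
  also have "\<dots> \<le> 3 * nd * nh\<^sup>2"
    using \<open>nd > 0\<close> by (simp add: mult_right_mono)
  finally show ?thesis using quad_form_hessian_nonneg[OF y, of h] by (simp add: nh_def nd_def)
qed

lemma has_real_derivative_quad_form_along_line:
  assumes "x + s *\<^sub>R d \<in> U"
  shows "((\<lambda>s. quad_form (H (x + s *\<^sub>R d)) h) has_real_derivative h \<bullet> (D3 (x + s *\<^sub>R d) d *v h)) (at s)"
  using has_real_derivative_along_line[of "\<lambda>z. h \<bullet> (H z *v h)" "\<lambda>k. h \<bullet> (D3 (x + s *\<^sub>R d) k *v h)" x s d]
    has_derivative_bilinear_matrix[OF has_derivative_H[OF assms], of h h]
  by (simp add: quad_form_def)

lemma local_norm_along_segment_le:
  assumes x: "x \<in> U" and t: "0 \<le> t" "t * local_norm H x d < 1"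
    and path: "\<And>s. 0 \<le> s \<Longrightarrow> s \<le> t \<Longrightarrow> x + s *\<^sub>R d \<in> U"
  shows "local_norm H (x + t *\<^sub>R d) d \<le> local_norm H x d / (1 - t * local_norm H x d)"
proof (cases "d = 0")
  case True
  then show ?thesis by (simp add: quad_form_def)
next
  case False
  define \<phi> where "\<phi> s = quad_form (H (x + s *\<^sub>R d)) d" for s
  have "sqrt (\<phi> t) \<le> sqrt (\<phi> 0) / (1 - t * sqrt (\<phi> 0))"
  proof (rule sqrt_growth_bound[where \<phi>' = "\<lambda>s. d \<bullet> (D3 (x + s *\<^sub>R d) d *v d)"])
    show "0 \<le> t" "t * sqrt (\<phi> 0) < 1" using t by (simp_all add: \<phi>_def)
    fix s assume s: "0 \<le> s" "s \<le> t"
    show "0 < \<phi> s" unfolding \<phi>_def using hessian_pos_def[OF path[OF s] False] .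
    show "(\<phi> has_real_derivative d \<bullet> (D3 (x + s *\<^sub>R d) d *v d)) (at s)"
      unfolding \<phi>_def by (rule has_real_derivative_quad_form_along_line[OF path[OF s]])
    show "d \<bullet> (D3 (x + s *\<^sub>R d) d *v d) \<le> 2 * \<phi> s * sqrt (\<phi> s)"
      unfolding \<phi>_def using cubic_form_le[OF path[OF s], of d] by (rule abs_le_D1)
  qed
  then show ?thesis by (simp add: \<phi>_def)
qed

lemma hessian_along_segment_bounds:
  assumes x: "x \<in> U" and r: "local_norm H x d < 1"
    and path: "\<And>s. 0 \<le> s \<Longrightarrow> s \<le> 1 \<Longrightarrow> x + s *\<^sub>R d \<in> U"
    and t: "0 \<le> t" "t \<le> 1"
  shows "(1 - t * local_norm H x d) ^ 3 * quad_form (H x) h \<le> quad_form (H (x + t *\<^sub>R d)) h"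
    and "quad_form (H (x + t *\<^sub>R d)) h * (1 - t * local_norm H x d) ^ 3 \<le> quad_form (H x) h"
proof -
  define r where "r = local_norm H x d"
  have r0: "0 \<le> r" using quad_form_hessian_nonneg[OF x] by (simp add: r_def)
  have "r < 1" using r unfolding r_def .
  have c: "0 < 1 - s * r" if "0 \<le> s" "s \<le> 1" for s
    using mult_left_le_one_le[OF r0 that] \<open>r < 1\<close> by (simp add: mult.commute)
  have "(1 - s * r) * \<bar>h \<bullet> (D3 (x + s *\<^sub>R d) d *v h)\<bar> \<le> 3 * r * quad_form (H (x + s *\<^sub>R d)) h"
    if s: "0 \<le> s" "s \<le> 1" for s
  proof -
    have "local_norm H (x + s *\<^sub>R d) d \<le> r / (1 - s * r)"
      using local_norm_along_segment_le[OF x s(1), of d] c[OF s] path s by (simp add: r_def)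
    then have n: "(1 - s * r) * local_norm H (x + s *\<^sub>R d) d \<le> r"
      using c[OF s] by (simp add: field_simps)
    have "(1 - s * r) * \<bar>h \<bullet> (D3 (x + s *\<^sub>R d) d *v h)\<bar>
        \<le> (1 - s * r) * (3 * local_norm H (x + s *\<^sub>R d) d * quad_form (H (x + s *\<^sub>R d)) h)"
      using third_derivative_mixed_bound[OF path[OF s], of h d] c[OF s] by (intro mult_left_mono) auto
    also have "\<dots> = 3 * ((1 - s * r) * local_norm H (x + s *\<^sub>R d) d) * quad_form (H (x + s *\<^sub>R d)) h"
      by (simp only: mult_ac)
    also have "\<dots> \<le> 3 * r * quad_form (H (x + s *\<^sub>R d)) h"
      using n quad_form_hessian_nonneg[OF path[OF s], of h] by (intro mult_right_mono) auto
    finally show ?thesis .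
  qed
  then show "(1 - t * r) ^ 3 * quad_form (H x) h \<le> quad_form (H (x + t *\<^sub>R d)) h"
    and "quad_form (H (x + t *\<^sub>R d)) h * (1 - t * r) ^ 3 \<le> quad_form (H x) h"
    using cubic_distortion_lower[of t r "\<lambda>s. quad_form (H (x + s *\<^sub>R d)) h"
        "\<lambda>s. h \<bullet> (D3 (x + s *\<^sub>R d) d *v h)"]
      cubic_distortion_upper[of t r "\<lambda>s. quad_form (H (x + s *\<^sub>R d)) h"
        "\<lambda>s. h \<bullet> (D3 (x + s *\<^sub>R d) d *v h)"]
      t c path has_real_derivative_quad_form_along_line[OF path]
    by auto
qed

lemma has_real_derivative_f_along_line:
  "x + s *\<^sub>R d \<in> U \<Longrightarrow> ((\<lambda>s. f (x + s *\<^sub>R d)) has_real_derivative d \<bullet> g (x + s *\<^sub>R d)) (at s)"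
  using has_real_derivative_along_line[of f "\<lambda>k. g (x + s *\<^sub>R d) \<bullet> k" x s d] has_derivative_f
  by (simp add: inner_commute)

lemma has_real_derivative_gradient_along_line:
  "x + s *\<^sub>R d \<in> U \<Longrightarrow>
    ((\<lambda>s. w \<bullet> g (x + s *\<^sub>R d)) has_real_derivative w \<bullet> (H (x + s *\<^sub>R d) *v d)) (at s)"
  using has_real_derivative_along_line[of "\<lambda>z. w \<bullet> g z" "\<lambda>k. w \<bullet> (H (x + s *\<^sub>R d) *v k)" x s d]
  by (auto intro!: derivative_eq_intros has_derivative_g)

lemma bounded_along_segment:
  assumes x: "x \<in> U" and r: "local_norm H x d < 1" and "t0 \<le> 1"
    and path: "\<And>s. 0 \<le> s \<Longrightarrow> s < t0 \<Longrightarrow> x + s *\<^sub>R d \<in> U"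
  obtains C where "\<And>s. 0 \<le> s \<Longrightarrow> s < t0 \<Longrightarrow> f (x + s *\<^sub>R d) \<le> C"
proof -
  define r where "r = local_norm H x d"
  have "0 \<le> r" "r < 1" using quad_form_hessian_nonneg[OF x] r by (simp_all add: r_def)
  define B where "B = (r / (1 - r))\<^sup>2"
  have "quad_form (H (x + s *\<^sub>R d)) d \<le> B" if s: "0 \<le> s" "s < t0" for s
  proof -
    have "s * r \<le> r" using s \<open>t0 \<le> 1\<close> \<open>0 \<le> r\<close> by (intro mult_left_le_one_le) auto
    with \<open>r < 1\<close> have "s * r < 1" by linarith
    then have "local_norm H (x + s *\<^sub>R d) d \<le> r / (1 - s * r)"
      unfolding r_def by (rule local_norm_along_segment_le[OF x s(1)]) (simp add: path s(2) order.strict_trans1)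
    also have "\<dots> \<le> r / (1 - r)"
      using \<open>s * r \<le> r\<close> \<open>0 \<le> r\<close> \<open>r < 1\<close> by (intro divide_left_mono) auto
    finally show ?thesis
      using quad_form_hessian_nonneg[OF path[OF s], of d] unfolding B_def
      by (metis power_mono real_sqrt_ge_zero real_sqrt_pow2)
  qed
  then have "f (x + s *\<^sub>R d) \<le> f x + \<bar>d \<bullet> g x\<bar> + B" if "0 \<le> s" "s < t0" for s
    using bounded_above_of_second_derivative_bound[OF \<open>t0 \<le> 1\<close>, of B "\<lambda>s. f (x + s *\<^sub>R d)"
        "\<lambda>s. d \<bullet> g (x + s *\<^sub>R d)" "\<lambda>s. quad_form (H (x + s *\<^sub>R d)) d"]
      has_real_derivative_f_along_line[OF path] has_real_derivative_gradient_along_line[OF path] that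
    by (simp add: B_def quad_form_def)
  then show ?thesis by (rule that)
qed

lemma segment_in_domain:
  assumes barrier: "\<And>p. p \<in> frontier U \<Longrightarrow> filterlim f at_top (at p within U)"
    and x: "x \<in> U" and r: "local_norm H x d < 1" and t: "0 \<le> t" "t \<le> 1"
  shows "x + t *\<^sub>R d \<in> U"
proof (rule ccontr)
  assume "x + t *\<^sub>R d \<notin> U"
  define S where "S = {0..1} \<inter> (\<lambda>s. x + s *\<^sub>R d) -` (- U)"
  have "t \<in> S" using t \<open>x + t *\<^sub>R d \<notin> U\<close> by (simp add: S_def)
  have "closed S" unfolding S_def
    by (intro closed_Int closed_atLeastAtMost continuous_closed_vimage closed_Compl open_domain)
       (auto intro!: continuous_intros)
  have "bdd_below S" by (rule bdd_belowI[of _ 0]) (auto simp: S_def)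
  define t0 where "t0 = Inf S"
  have "t0 \<in> S" unfolding t0_def using closed_contains_Inf \<open>t \<in> S\<close> \<open>bdd_below S\<close> \<open>closed S\<close> by blast
  then have t0: "t0 \<le> 1" "x + t0 *\<^sub>R d \<notin> U" "0 < t0"
    using x by (auto simp: S_def order_less_le)
  have path: "x + s *\<^sub>R d \<in> U" if "0 \<le> s" "s < t0" for s
    using cInf_lower[OF _ \<open>bdd_below S\<close>, of s] that t0 by (force simp: S_def t0_def)
  obtain C where C: "\<And>s. 0 \<le> s \<Longrightarrow> s < t0 \<Longrightarrow> f (x + s *\<^sub>R d) \<le> C"
    using bounded_along_segment[OF x r t0(1) path] by blast
  have ev: "eventually (\<lambda>s. 0 < s \<and> s < t0) (at_left t0)"
    using t0 by (auto simp: eventually_at_left intro!: exI[of _ 0])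
  have lim: "((\<lambda>s. x + s *\<^sub>R d) \<longlongrightarrow> x + t0 *\<^sub>R d) (at_left t0)"
    by (intro tendsto_intros)
  have "eventually (\<lambda>s. x + s *\<^sub>R d \<in> closure U) (at_left t0)"
    using ev by eventually_elim (simp add: closure_def path)
  then have "x + t0 *\<^sub>R d \<in> closure U"
    by (rule Lim_in_closed_set[OF closed_closure _ _ lim]) simp
  then have "x + t0 *\<^sub>R d \<in> frontier U"
    using t0(2) open_domain by (simp add: frontier_def interior_open)
  moreover have "filterlim (\<lambda>s. x + s *\<^sub>R d) (at (x + t0 *\<^sub>R d) within U) (at_left t0)"
    unfolding filterlim_at using lim ev path t0(2) x by (auto elim!: eventually_mono)
  ultimately have "filterlim (\<lambda>s. f (x + s *\<^sub>R d)) at_top (at_left t0)"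
    using barrier filterlim_compose by blast
  then have "eventually (\<lambda>s. C + 1 \<le> f (x + s *\<^sub>R d)) (at_left t0)"
    unfolding filterlim_at_top by blast
  with ev have "eventually (\<lambda>s. False) (at_left t0)"
    by eventually_elim (force dest: C[OF less_imp_le])
  then show False by simp
qed

lemma hessian_difference_bilinear_le:
  assumes x: "x \<in> U" and r: "local_norm H x d < 1"
    and path: "\<And>s. 0 \<le> s \<Longrightarrow> s \<le> 1 \<Longrightarrow> x + s *\<^sub>R d \<in> U"
    and s: "0 \<le> s" "s \<le> 1"
  shows "\<bar>w \<bullet> ((H (x + s *\<^sub>R d) - H x) *v d)\<bar>
    \<le> (1 / (1 - s * local_norm H x d) ^ 3 - 1) * local_norm H x w * local_norm H x d"
proof -
  define r where "r = local_norm H x d"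
  have "0 \<le> r" "r < 1" using quad_form_hessian_nonneg[OF x] r by (simp_all add: r_def)
  then have "0 < 1 - s * r" "1 - s * r \<le> 1"
    using mult_left_le_one_le[OF \<open>0 \<le> r\<close> s] s by (simp_all add: mult.commute)
  define c where "c = (1 - s * r) ^ 3"
  have c: "0 < c" "c \<le> 1"
    using \<open>0 < 1 - s * r\<close> \<open>1 - s * r \<le> 1\<close> by (simp_all add: c_def power_le_one)
  have "\<bar>quad_form (H (x + s *\<^sub>R d) - H x) v\<bar> \<le> (1 / c - 1) * quad_form (H x) v" for v
  proof -
    have lower: "c * quad_form (H x) v \<le> quad_form (H (x + s *\<^sub>R d)) v"
      and upper: "quad_form (H (x + s *\<^sub>R d)) v * c \<le> quad_form (H x) v"
      using hessian_along_segment_bounds[OF x r path s] by (simp_all add: c_def r_def)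
    have "c * (1 - c) \<le> 1 - c" using c by (simp add: mult_left_le_one_le)
    then have "1 - c \<le> 1 / c - 1" using c by (simp add: field_simps)
    then have "(1 - c) * quad_form (H x) v \<le> (1 / c - 1) * quad_form (H x) v"
      using quad_form_hessian_nonneg[OF x, of v] by (rule mult_right_mono)
    moreover have "quad_form (H (x + s *\<^sub>R d)) v \<le> quad_form (H x) v / c"
      using upper c by (simp add: le_divide_eq)
    ultimately show ?thesis
      using lower by (simp add: quad_form_matrix_diff abs_le_iff algebra_simps diff_divide_distrib)
  qed
  moreover have "symmetric_matrix (H (x + s *\<^sub>R d) - H x)"
    using hessian_symmetric[OF path[OF s]] hessian_symmetric[OF x] by (rule symmetric_matrix_diff)
  ultimately show ?thesis
    using abs_bilinear_le_by_quad_form_bound[OF _ hessian_symmetric[OF x] hessian_pos_def[OF x]]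
    by (simp add: c_def r_def)
qed

lemma gradient_remainder_bound:
  assumes x: "x \<in> U" and r: "local_norm H x d < 1"
    and path: "\<And>s. 0 \<le> s \<Longrightarrow> s \<le> 1 \<Longrightarrow> x + s *\<^sub>R d \<in> U"
  shows "\<bar>w \<bullet> (g (x + d) - g x - H x *v d)\<bar>
    \<le> local_norm H x w * remainder_coeff (local_norm H x d)"
proof -
  define r where "r = local_norm H x d"
  define nw where "nw = local_norm H x w"
  have "0 \<le> r" "r < 1" using quad_form_hessian_nonneg[OF x] r by (simp_all add: r_def)
  have c: "0 < 1 - s * r" if "0 \<le> s" "s \<le> 1" for s
    using mult_left_le_one_le[OF \<open>0 \<le> r\<close> that] \<open>r < 1\<close> by (simp add: mult.commute)
  define F where "F s = w \<bullet> g (x + s *\<^sub>R d) - s * (w \<bullet> (H x *v d))" for s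
  define B where "B s = nw * (1 / (2 * (1 - s * r)\<^sup>2) - s * r)" for s
  have "\<bar>F 1 - F 0\<bar> \<le> B 1 - B 0"
  proof (rule abs_diff_le_of_derivative_bound)
    fix s :: real assume s: "0 \<le> s" "s \<le> 1"
    show "(F has_real_derivative w \<bullet> ((H (x + s *\<^sub>R d) - H x) *v d)) (at s)"
      unfolding F_def using has_real_derivative_gradient_along_line[OF path[OF s], of w]
      by (auto intro!: derivative_eq_intros simp: matrix_vector_mult_diff_rdistrib inner_diff_right)
    have inv: "((\<lambda>u. 1 / (2 * u\<^sup>2)) has_real_derivative - 1 / u ^ 3) (at u)" if "u \<noteq> 0" for u :: real
      using that by (auto intro!: derivative_eq_intros simp: field_simps power2_eq_square power3_eq_cube)
    have "((\<lambda>s. 1 / (2 * (1 - s * r)\<^sup>2)) has_real_derivative (- 1 / (1 - s * r) ^ 3) * (- r)) (at s)"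
      using c[OF s]
      by (intro DERIV_chain2[where f="\<lambda>u. 1 / (2 * u\<^sup>2)" and g="\<lambda>s. 1 - s * r", OF inv])
        (auto intro!: derivative_eq_intros)
    then have "(B has_real_derivative nw * ((- 1 / (1 - s * r) ^ 3) * (- r) - r)) (at s)"
      unfolding B_def by (rule DERIV_cmult[OF DERIV_diff]) (auto intro!: derivative_eq_intros)
    moreover have "nw * ((- 1 / (1 - s * r) ^ 3) * (- r) - r) = (1 / (1 - s * r) ^ 3 - 1) * nw * r"
      by (simp add: algebra_simps)
    ultimately show "(B has_real_derivative (1 / (1 - s * r) ^ 3 - 1) * nw * r) (at s)"
      by (simp only:)
    show "\<bar>w \<bullet> ((H (x + s *\<^sub>R d) - H x) *v d)\<bar> \<le> (1 / (1 - s * r) ^ 3 - 1) * nw * r"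
      using hessian_difference_bilinear_le[OF x r path s] by (simp add: r_def nw_def)
  qed simp
  then show ?thesis
    by (simp add: F_def B_def r_def nw_def remainder_coeff_def algebra_simps inner_diff_right)
qed

lemma hessian_nondegenerate:
  assumes "y \<in> U"
  shows "symmetric_matrix (H y)" "pos_semidef (H y)" "invertible (H y)"
  using hessian_symmetric hessian_pos_semidef invertible_hessian assms by auto

lemma dual_local_norm_le_of_hessian_ge:
  assumes y1: "y1 \<in> U" and y2: "y2 \<in> U" and "0 < c"
    and ge: "\<And>h. c * quad_form (H y1) h \<le> quad_form (H y2) h"
  shows "dual_local_norm H y2 v \<le> dual_local_norm H y1 v / sqrt c"
proof (rule dual_local_norm_le[of H y2, OF hessian_nondegenerate[OF y2]])
  show "0 \<le> dual_local_norm H y1 v / sqrt c"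
    using dual_local_norm_nonneg[of H y1, OF hessian_nondegenerate[OF y1]] \<open>0 < c\<close> by simp
  fix w
  have "local_norm H y1 w \<le> local_norm H y2 w / sqrt c"
    using real_sqrt_le_mono[of "quad_form (H y1) w" "quad_form (H y2) w / c"] ge[of w] \<open>0 < c\<close>
    by (simp add: le_divide_eq mult.commute real_sqrt_divide)
  then have "dual_local_norm H y1 v * local_norm H y1 w \<le> dual_local_norm H y1 v * (local_norm H y2 w / sqrt c)"
    using dual_local_norm_nonneg[of H y1, OF hessian_nondegenerate[OF y1]] by (rule mult_left_mono)
  with abs_inner_le_dual_local_norm[of H y1, OF hessian_nondegenerate[OF y1], of w v]
  show "\<bar>w \<bullet> v\<bar> \<le> dual_local_norm H y1 v / sqrt c * local_norm H y2 w" by simp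
qed

lemma dual_local_norm_after_step:
  assumes x: "x \<in> U" and r: "local_norm H x d < 1"
    and path: "\<And>s. 0 \<le> s \<Longrightarrow> s \<le> 1 \<Longrightarrow> x + s *\<^sub>R d \<in> U"
  shows "dual_local_norm H (x + d) v \<le> dual_local_norm H x v / (1 - local_norm H x d)\<^sup>2"
proof -
  define r where "r = local_norm H x d"
  have "0 \<le> r" "r < 1" using quad_form_hessian_nonneg[OF x] r by (simp_all add: r_def)
  have "(1 - r) ^ 4 = ((1 - r)\<^sup>2)\<^sup>2" by (simp flip: power_mult)
  then have "(1 - r)\<^sup>2 = sqrt ((1 - r) ^ 4)" by (simp only: real_sqrt_abs abs_power2)
  also have "\<dots> \<le> sqrt ((1 - r) ^ 3)"
    using \<open>0 \<le> r\<close> \<open>r < 1\<close> by (intro real_sqrt_le_mono power_decreasing) auto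
  finally have "(1 - r)\<^sup>2 \<le> sqrt ((1 - r) ^ 3)" .
  have "dual_local_norm H (x + d) v \<le> dual_local_norm H x v / sqrt ((1 - r) ^ 3)"
    using dual_local_norm_le_of_hessian_ge[OF x path[of 1] _ hessian_along_segment_bounds(1)[OF x r path]]
      \<open>r < 1\<close> by (simp add: r_def)
  also have "\<dots> \<le> dual_local_norm H x v / (1 - r)\<^sup>2"
    using dual_local_norm_nonneg[of H x, OF hessian_nondegenerate[OF x]] \<open>(1 - r)\<^sup>2 \<le> sqrt ((1 - r) ^ 3)\<close>
      \<open>r < 1\<close> by (intro divide_left_mono) auto
  finally show ?thesis by (simp add: r_def)
qed

lemma predictor_residual_le:
  assumes x: "x \<in> U" and r: "local_norm H x d < 1"
    and path: "\<And>s. 0 \<le> s \<Longrightarrow> s \<le> 1 \<Longrightarrow> x + s *\<^sub>R d \<in> U"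
    and "0 \<le> a" "0 \<le> \<tau>"
  shows "dual_local_norm H (x + d) (a *\<^sub>R v + \<tau> *\<^sub>R (g (x + d) - g x - H x *v d))
    \<le> (a * dual_local_norm H x v + \<tau> * remainder_coeff (local_norm H x d)) / (1 - local_norm H x d)\<^sup>2"
proof -
  have "dual_local_norm H x (g (x + d) - g x - H x *v d) \<le> remainder_coeff (local_norm H x d)"
    using dual_local_norm_le[of H x, OF hessian_nondegenerate[OF x]] gradient_remainder_bound[OF x r path]
      remainder_coeff_nonneg[OF _ r] quad_form_hessian_nonneg[OF x]
    by (simp add: mult.commute)
  then have "a * dual_local_norm H x v + \<tau> * dual_local_norm H x (g (x + d) - g x - H x *v d)
      \<le> a * dual_local_norm H x v + \<tau> * remainder_coeff (local_norm H x d)"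
    using \<open>0 \<le> \<tau>\<close> by (simp add: mult_left_mono)
  moreover have "dual_local_norm H x (a *\<^sub>R v + \<tau> *\<^sub>R (g (x + d) - g x - H x *v d))
      \<le> a * dual_local_norm H x v + \<tau> * dual_local_norm H x (g (x + d) - g x - H x *v d)"
    using dual_local_norm_triangle[of H x, OF hessian_nondegenerate[OF x],
        of "a *\<^sub>R v" "\<tau> *\<^sub>R (g (x + d) - g x - H x *v d)"] \<open>0 \<le> a\<close> \<open>0 \<le> \<tau>\<close>
    unfolding dual_local_norm_scaleR[of H x, OF hessian_nondegenerate[OF x]] by simp
  ultimately show ?thesis
    using dual_local_norm_after_step[OF x r path, of "a *\<^sub>R v + \<tau> *\<^sub>R (g (x + d) - g x - H x *v d)"]
    by (meson divide_right_mono order_trans zero_le_power2)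
qed

end

section \<open>The damped Newton step\<close>

lemma newton_direction_orthogonal:
  fixes A :: "real^'n^'m"
  assumes "A *v dx = 0" "transpose A *v dy + ds = 0"
  shows "dx \<bullet> ds = 0"
proof -
  have "ds = - (transpose A *v dy)" using assms(2) by (simp add: eq_neg_iff_add_eq_0 add.commute)
  moreover have "dx \<bullet> (transpose A *v dy) = (A *v dx) \<bullet> dy"
    using dot_lmul_matrix[of dy A dx] by (simp add: inner_commute)
  ultimately show ?thesis using assms(1) by simp
qed

lemma newton_update_residual_decomposition:
  fixes g :: "real^'n \<Rightarrow> real^'n" and H :: "real^'n \<Rightarrow> real^'n^'n"
  assumes "\<tau> *\<^sub>R (H x *v dx) + ds = - (s + \<tau> *\<^sub>R g x)"
  shows "s + \<alpha> *\<^sub>R ds + \<tau>' *\<^sub>R g (x + \<alpha> *\<^sub>R dx)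
    = ((1 - \<alpha>) *\<^sub>R (s + \<tau> *\<^sub>R g x) + \<tau> *\<^sub>R (g (x + \<alpha> *\<^sub>R dx) - g x - H x *v (\<alpha> *\<^sub>R dx)))
      + (\<tau>' - \<tau>) *\<^sub>R g (x + \<alpha> *\<^sub>R dx)"
proof -
  have ds: "ds = - (s + \<tau> *\<^sub>R g x) - \<tau> *\<^sub>R (H x *v dx)" using assms by (metis add_diff_cancel_left')
  show ?thesis unfolding ds by (simp add: algebra_simps matrix_vector_mult_scaleR)
qed

context self_concordant begin

lemma newton_step_short:
  assumes x: "x \<in> U" and "0 < \<tau>" and newton: "newton_system A g H \<tau> x y s dx dy ds"
    and central: "dual_local_norm H x (s + \<tau> *\<^sub>R g x) \<le> \<eta> * \<tau>"
  shows "local_norm H x dx \<le> \<eta>"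
proof -
  from newton have "A *v dx = 0" "transpose A *v dy + ds = 0" "\<tau> *\<^sub>R (H x *v dx) + ds = - (s + \<tau> *\<^sub>R g x)"
    by (simp_all add: newton_system_def)
  with \<open>0 < \<tau>\<close> have "\<tau> * local_norm H x dx \<le> dual_local_norm H x (s + \<tau> *\<^sub>R g x)"
    by (intro local_norm_le_dual_local_norm_of_newton_equation[of H x, OF hessian_nondegenerate[OF x]]
        newton_direction_orthogonal) auto
  with central have "\<tau> * local_norm H x dx \<le> \<tau> * \<eta>" by (simp add: mult.commute)
  with \<open>0 < \<tau>\<close> show ?thesis by simp
qed

lemma residual_after_damped_step:
  assumes x: "x \<in> U" and r: "local_norm H x (\<alpha> *\<^sub>R dx) < 1"
    and path: "\<And>t. 0 \<le> t \<Longrightarrow> t \<le> 1 \<Longrightarrow> x + t *\<^sub>R (\<alpha> *\<^sub>R dx) \<in> U"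
    and newton: "\<tau> *\<^sub>R (H x *v dx) + ds = - (s + \<tau> *\<^sub>R g x)"
    and central: "dual_local_norm H x (s + \<tau> *\<^sub>R g x) \<le> \<eta> * \<tau>"
    and grad: "dual_local_norm H (x + \<alpha> *\<^sub>R dx) (g (x + \<alpha> *\<^sub>R dx)) \<le> \<gamma>"
    and "\<alpha> \<le> 1" "0 \<le> \<tau>" "0 \<le> \<theta>"
  shows "dual_local_norm H (x + \<alpha> *\<^sub>R dx) (s + \<alpha> *\<^sub>R ds + ((1 - \<theta>) * \<tau>) *\<^sub>R g (x + \<alpha> *\<^sub>R dx))
    \<le> \<tau> * (((1 - \<alpha>) * \<eta> + remainder_coeff (local_norm H x (\<alpha> *\<^sub>R dx)))
        / (1 - local_norm H x (\<alpha> *\<^sub>R dx))\<^sup>2) + \<theta> * \<tau> * \<gamma>"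
proof -
  define d where "d = \<alpha> *\<^sub>R dx"
  define r where "r = local_norm H x d"
  define u where "u = (1 - \<alpha>) *\<^sub>R (s + \<tau> *\<^sub>R g x) + \<tau> *\<^sub>R (g (x + d) - g x - H x *v d)"
  have xd: "x + d \<in> U" using path[of 1] by (simp add: d_def)
  note dual_xd = hessian_nondegenerate[OF xd]
  have "s + \<alpha> *\<^sub>R ds + ((1 - \<theta>) * \<tau>) *\<^sub>R g (x + d) = u + (- (\<theta> * \<tau>)) *\<^sub>R g (x + d)"
    using newton_update_residual_decomposition[where g=g and H=H and x=x and \<tau>'="(1 - \<theta>) * \<tau>", OF newton]
    by (simp add: u_def d_def algebra_simps)
  then have "dual_local_norm H (x + d) (s + \<alpha> *\<^sub>R ds + ((1 - \<theta>) * \<tau>) *\<^sub>R g (x + d))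
      \<le> dual_local_norm H (x + d) u + dual_local_norm H (x + d) ((- (\<theta> * \<tau>)) *\<^sub>R g (x + d))"
    by (simp only: dual_local_norm_triangle[of H "x + d", OF dual_xd])
  also have "\<dots> = dual_local_norm H (x + d) u + \<theta> * \<tau> * dual_local_norm H (x + d) (g (x + d))"
    using \<open>0 \<le> \<theta>\<close> \<open>0 \<le> \<tau>\<close> by (subst dual_local_norm_scaleR[of H "x + d", OF dual_xd]) (simp add: abs_mult)
  also have "\<dots> \<le> ((1 - \<alpha>) * (\<eta> * \<tau>) + \<tau> * remainder_coeff r) / (1 - r)\<^sup>2 + \<theta> * \<tau> * \<gamma>"
  proof (rule add_mono)
    have "dual_local_norm H (x + d) u
        \<le> ((1 - \<alpha>) * dual_local_norm H x (s + \<tau> *\<^sub>R g x) + \<tau> * remainder_coeff r) / (1 - r)\<^sup>2"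
      unfolding u_def r_def d_def using r \<open>\<alpha> \<le> 1\<close> \<open>0 \<le> \<tau>\<close> by (intro predictor_residual_le[OF x _ path]) auto
    also have "\<dots> \<le> ((1 - \<alpha>) * (\<eta> * \<tau>) + \<tau> * remainder_coeff r) / (1 - r)\<^sup>2"
      using central \<open>\<alpha> \<le> 1\<close> by (intro divide_right_mono add_right_mono mult_left_mono) auto
    finally show "dual_local_norm H (x + d) u \<le> ((1 - \<alpha>) * (\<eta> * \<tau>) + \<tau> * remainder_coeff r) / (1 - r)\<^sup>2" .
    show "\<theta> * \<tau> * dual_local_norm H (x + d) (g (x + d)) \<le> \<theta> * \<tau> * \<gamma>"
      using grad \<open>0 \<le> \<theta>\<close> \<open>0 \<le> \<tau>\<close> by (intro mult_left_mono) (auto simp: d_def)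
  qed
  finally show ?thesis by (simp add: d_def r_def add_divide_distrib algebra_simps)
qed

end

lemma lhscb_imp_self_concordant:
  assumes "lhscb K f g H \<nu>"
  obtains D3 where "self_concordant (interior K) f g H D3"
proof -
  note lhscb = assms[unfolded lhscb_def]
  obtain D3 where D3: "\<forall>x\<in>interior K. (H has_derivative D3 x) (at x) \<and>
      (\<forall>h. \<bar>h \<bullet> (D3 x h *v h)\<bar> \<le> 2 * (h \<bullet> (H x *v h)) powr (3/2))"
    using bchoice[of "interior K"] lhscb by meson
  have convex: "convex_on (interior K) f"
  proof (rule convex_onI)
    show "convex (interior K)" using lhscb by (simp add: strictly_convex_on_def)
    fix t :: real and u v assume "0 < t" "t < 1" "u \<in> interior K" "v \<in> interior K"
    moreover have "f ((1 - t) *\<^sub>R u + t *\<^sub>R v) < (1 - t) * f u + t * f v" if "u \<noteq> v"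
      using lhscb \<open>0 < t\<close> \<open>t < 1\<close> \<open>u \<in> interior K\<close> \<open>v \<in> interior K\<close> that
      unfolding strictly_convex_on_def by blast
    ultimately show "f ((1 - t) *\<^sub>R u + t *\<^sub>R v) \<le> (1 - t) * f u + t * f v"
      by (cases "u = v") (simp_all add: scaleR_collapse algebra_simps)
  qed
  have "\<forall>x\<in>interior K. (f has_derivative (\<lambda>h. g x \<bullet> h)) (at x)"
    "\<forall>x\<in>interior K. (g has_derivative (\<lambda>h. H x *v h)) (at x)"
    "\<forall>x\<in>interior K. invertible (H x)"
    using lhscb by blast+
  with convex D3 have "self_concordant (interior K) f g H D3"
    by unfold_locales simp_all
  then show ?thesis by (rule that)
qed

lemma lhscb_dual_local_norm_gradient_le:
  assumes "lhscb K f g H \<nu>" "y \<in> interior K"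
  shows "dual_local_norm H y (g y) \<le> sqrt \<nu>"
  using assms cSUP_upper[of y "interior K" "\<lambda>x. g x \<bullet> (matrix_inv (H x) *v g x)"]
  unfolding lhscb_def dual_local_norm_def by (auto intro: real_sqrt_le_mono)

lemma lhscb_parameter_nonneg:
  assumes "lhscb K f g H \<nu>" "x \<in> interior K"
  shows "0 \<le> \<nu>"
proof -
  obtain D3 where "self_concordant (interior K) f g H D3"
    using lhscb_imp_self_concordant[OF assms(1)] .
  then have "0 \<le> dual_local_norm H x (g x)"
    using self_concordant.hessian_nondegenerate[of "interior K" f g H D3 x] assms(2)
    by (intro dual_local_norm_nonneg) auto
  then show ?thesis
    using lhscb_dual_local_norm_gradient_le[OF assms] by (metis order_trans real_sqrt_ge_0_iff)
qed

lemma lhscb_barrier: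
  assumes "lhscb K f g H \<nu>" "p \<in> frontier (interior K)"
  shows "filterlim f at_top (at p within interior K)"
  using assms frontier_interior_subset unfolding lhscb_def by blast

theorem lemmaB1:
  fixes K :: "(real^'n) set" and f :: "real^'n \<Rightarrow> real" and g :: "real^'n \<Rightarrow> real^'n"
    and H :: "real^'n \<Rightarrow> real^'n^'n" and \<nu> :: real
    and A :: "real^'n^'m" and b :: "real^'m" and c :: "real^'n"
    and \<eta> \<tau> \<alpha> :: real and x dx s ds :: "real^'n" and y dy :: "real^'m"
  assumes "proper_cone K"
    and "lhscb K f g H \<nu>"
    and "rank A = CARD('m)"
    and "0 < \<eta>" and "\<eta> \<le> 1/4"
    and "0 < \<tau>"
    and "(x, y, s) \<in> neighborhood K A b c g H \<eta> \<tau>"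
    and "newton_system A g H \<tau> x y s dx dy ds"
    and "0 < \<alpha>" and "\<alpha> \<le> 1"
  shows "let \<theta> = (\<eta> / 2) / (sqrt \<nu> + 1);
             xp = x + \<alpha> *\<^sub>R dx; sp = s + \<alpha> *\<^sub>R ds; yp = y + \<alpha> *\<^sub>R dy;
             \<tau>p = (1 - \<theta>) * \<tau>
         in xp \<in> interior K \<and> dual_local_norm H xp (sp + \<tau>p *\<^sub>R g xp) \<le> 2 * \<eta> * \<tau>p"
proof -
  obtain D3 where "self_concordant (interior K) f g H D3"
    using lhscb_imp_self_concordant[OF assms(2)] .
  then interpret self_concordant "interior K" f g H D3 .
  define \<theta> where "\<theta> = (\<eta> / 2) / (sqrt \<nu> + 1)"
  define r where "r = local_norm H x (\<alpha> *\<^sub>R dx)"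
  from assms(7) have x: "x \<in> interior K" and central: "dual_local_norm H x (s + \<tau> *\<^sub>R g x) \<le> \<eta> * \<tau>"
    by (auto simp: neighborhood_def strictly_feasible_def)
  have "0 \<le> \<nu>" by (rule lhscb_parameter_nonneg[OF assms(2) x])
  have "r \<le> \<alpha> * \<eta>"
    using newton_step_short[OF x assms(6,8) central] assms(9)
    by (simp add: r_def sqrt_quad_form_scaleR mult_left_mono)
  moreover have "\<alpha> * \<eta> \<le> 1 / 4" using assms(4,5,9,10) mult_left_le_one_le[of \<eta> \<alpha>] by linarith
  moreover have "0 \<le> r" using quad_form_hessian_nonneg[OF x] by (simp add: r_def)
  ultimately have r: "0 \<le> r" "r < 1" "r \<le> \<alpha> * \<eta>" by auto
  have path: "x + t *\<^sub>R (\<alpha> *\<^sub>R dx) \<in> interior K" if "0 \<le> t" "t \<le> 1" for t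
    using segment_in_domain[OF lhscb_barrier[OF assms(2)] x, of "\<alpha> *\<^sub>R dx" t] r(2) that
    unfolding r_def by blast
  have "dual_local_norm H (x + \<alpha> *\<^sub>R dx) (s + \<alpha> *\<^sub>R ds + ((1 - \<theta>) * \<tau>) *\<^sub>R g (x + \<alpha> *\<^sub>R dx))
      \<le> \<tau> * (((1 - \<alpha>) * \<eta> + remainder_coeff r) / (1 - r)\<^sup>2) + \<theta> * \<tau> * sqrt \<nu>"
    unfolding r_def
  proof (rule residual_after_damped_step[OF x _ path _ central])
    show "\<tau> *\<^sub>R (H x *v dx) + ds = - (s + \<tau> *\<^sub>R g x)" using assms(8) by (simp add: newton_system_def)
    show "dual_local_norm H (x + \<alpha> *\<^sub>R dx) (g (x + \<alpha> *\<^sub>R dx)) \<le> sqrt \<nu>"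
      using lhscb_dual_local_norm_gradient_le[OF assms(2)] path[of 1] by simp
  qed (use r assms(4,6,10) \<open>0 \<le> \<nu>\<close> in \<open>auto simp: r_def \<theta>_def\<close>)
  also have "\<dots> \<le> 2 * \<eta> * ((1 - \<theta>) * \<tau>)"
    unfolding \<theta>_def using assms(4,5,6,9,10) r \<open>0 \<le> \<nu>\<close> by (intro short_step_inequality) auto
  finally show ?thesis using path[of 1] unfolding Let_def \<theta>_def by simp
qed

end
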